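(* Let $M\ge1$ and let $\mathbf a$ and $\mathbf b$ be distinct words in $\mathcal A_M$ such that $J_{\mathbf b}\subset J_{\mathbf a}$. Then there is a word $\mathbf c\in\mathcal A_1$ such that $\mathbf b=\mathbf a\circ\mathbf c$.
   Context: Order and word operations. Words over $\{0,\dots,M\}$ and sequences in $\Omega_M=\{0,\dots,M\}^{\mathbb N}$ are ordered lexicographically; for words, $\mathbf c\prec\mathbf d$ iff $\mathbf c0^\infty\prec\mathbf d0^\infty$. For a word $c_1\dots c_k$: - if $c_k<M$, then $c_1\dots c_k^+=c_1\dots c_{k-1}(c_k+1)$; - $\overline{c_1\dots c_k}=(M-c_1)\dots(M-c_k)$. Quasi-greedy expansion. For $q\in(1,M+1]$, $\alpha(q)$ is the lexicographically largest sequence in $\Omega_M$ not ending in $0^\infty$ with $\sum\alpha_i(q)q^{-i}=1$. Fundamental words. A word $a_1\dots a_m$ ($m\ge2$) is fundamental if $\overline{a_1\dots a_{m-i}}\preceq a_{i+1}\dots a_m\prec a_1\dots a_{m-i}$ for $1\le i<m$. When $M\ge2$, a letter $a_1$ is fundamental if $M-a_1\le a_1<M$. $\mathcal A_M$ is the set of fundamental words, and $\mathcal A_1$ is the case $M=1$ (such words begin with $1$). Fundamental intervals. For $\mathbf a\in\mathcal A_M$, $J_{\mathbf a}=[q_L(\mathbf a),q_R(\mathbf a)]$, where $\alpha(q_L(\mathbf a))=\mathbf a^\infty$ and $\alpha(q_R(\mathbf a))=\mathbf a^+(\overline{\mathbf a})^\infty$. The graph. Let $G$ have vertices Start, $A$,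 $B$ and edges - $e_0$: Start$\to A$, - $e_1$: $A\to B$, - $e_2$: $B\to B$, - $e_3$: $B\to A$, - $e_4$: $A\to A$. It carries two labelings: - $\mathcal L_{\mathbf a}$: $e_0,e_3\mapsto\mathbf a^+$; $e_1\mapsto\overline{\mathbf a^+}$; $e_2\mapsto\mathbf a$; $e_4\mapsto\overline{\mathbf a}$; - $\mathcal L^*$: $e_0,e_3,e_4\mapsto1$; $e_1,e_2\mapsto0$. Composition. For a path $e_{i_1}\dots e_{i_k}$ with $i_1=0$, let $\Phi_{\mathbf a}$ map the block word $\mathcal L_{\mathbf a}(e_{i_1})\cdots\mathcal L_{\mathbf a}(e_{i_k})$ to $\mathcal L^*(e_{i_1}\dots e_{i_k})$. For $\mathbf c\in\mathcal A_1$, $\mathbf a\circ\mathbf c:=\Phi_{\mathbf a}^{-1}(\mathbf c)$ is the unique such block word with image $\mathbf c$. *)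

theory Defs
  imports Complex_Main
begin

text \<open>Sequences in Omega_M are functions nat => nat (index 0 = first digit);
words are nat lists.\<close>

definition in_Omega :: "nat \<Rightarrow> (nat \<Rightarrow> nat) \<Rightarrow> bool" where
  "in_Omega M s \<longleftrightarrow> (\<forall>i. s i \<le> M)"

definition seq_less :: "(nat \<Rightarrow> nat) \<Rightarrow> (nat \<Rightarrow> nat) \<Rightarrow> bool" where
  "seq_less s t \<longleftrightarrow> (\<exists>n. (\<forall>i<n. s i = t i) \<and> s n < t n)"

definition seq_le :: "(nat \<Rightarrow> nat) \<Rightarrow> (nat \<Rightarrow> nat) \<Rightarrow> bool" where
  "seq_le s t \<longleftrightarrow> s = t \<or> seq_less s t"

definition pad0 :: "nat list \<Rightarrow> nat \<Rightarrow> nat" where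
  "pad0 c = (\<lambda>i. if i < length c then c ! i else 0)"

definition word_less :: "nat list \<Rightarrow> nat list \<Rightarrow> bool" where
  "word_less c d \<longleftrightarrow> seq_less (pad0 c) (pad0 d)"

definition word_le :: "nat list \<Rightarrow> nat list \<Rightarrow> bool" where
  "word_le c d \<longleftrightarrow> seq_le (pad0 c) (pad0 d)"

definition word_plus :: "nat list \<Rightarrow> nat list" where
  "word_plus c = butlast c @ [last c + 1]"

definition word_bar :: "nat \<Rightarrow> nat list \<Rightarrow> nat list" where
  "word_bar M c = map (\<lambda>x. M - x) c"

text \<open>c^\<infinity> for a nonempty word c\<close>
definition per :: "nat list \<Rightarrow> nat \<Rightarrow> nat" where
  "per c = (\<lambda>i. c ! (i mod length c))"

definition prefix_per :: "nat list \<Rightarrow> nat list \<Rightarrow> nat \<Rightarrow> nat" where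
  "prefix_per u v = (\<lambda>i. if i < length u then u ! i else per v (i - length u))"

definition not_ending_0 :: "(nat \<Rightarrow> nat) \<Rightarrow> bool" where
  "not_ending_0 s \<longleftrightarrow> (\<forall>n. \<exists>i\<ge>n. s i \<noteq> 0)"

definition expands_one :: "real \<Rightarrow> (nat \<Rightarrow> nat) \<Rightarrow> bool" where
  "expands_one q s \<longleftrightarrow> (\<lambda>i. real (s i) / q ^ Suc i) sums 1"

definition is_quasi_greedy :: "nat \<Rightarrow> real \<Rightarrow> (nat \<Rightarrow> nat) \<Rightarrow> bool" where
  "is_quasi_greedy M q s \<longleftrightarrow>
     in_Omega M s \<and> not_ending_0 s \<and> expands_one q s \<and>
     (\<forall>t. in_Omega M t \<and> not_ending_0 t \<and> expands_one q t \<longrightarrow> seq_le t s)"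

definition alpha :: "nat \<Rightarrow> real \<Rightarrow> (nat \<Rightarrow> nat)" where
  "alpha M q = (THE s. is_quasi_greedy M q s)"

definition fundamental :: "nat \<Rightarrow> nat list \<Rightarrow> bool" where
  "fundamental M a \<longleftrightarrow> set a \<subseteq> {0..M} \<and>
     ((length a \<ge> 2 \<and>
       (\<forall>i. 1 \<le> i \<and> i < length a \<longrightarrow>
          word_le (word_bar M (take (length a - i) a)) (drop i a) \<and>
          word_less (drop i a) (take (length a - i) a)))
      \<or> (M \<ge> 2 \<and> length a = 1 \<and> M - a ! 0 \<le> a ! 0 \<and> a ! 0 < M))"

definition qL :: "nat \<Rightarrow> nat list \<Rightarrow> real" where
  "qL M a = (THE q. 1 < q \<and> q \<le> real M + 1 \<and> alpha M q = per a)"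

definition qR :: "nat \<Rightarrow> nat list \<Rightarrow> real" where
  "qR M a = (THE q. 1 < q \<and> q \<le> real M + 1 \<and>
                    alpha M q = prefix_per (word_plus a) (word_bar M a))"

definition J :: "nat \<Rightarrow> nat list \<Rightarrow> real set" where
  "J M a = {qL M a .. qR M a}"

text \<open>The graph G: vertices Start = 0, A = 1, B = 2; edges e_0..e_4 encoded as 0..4.\<close>
definition edge_src :: "nat \<Rightarrow> nat" where
  "edge_src e = (if e = 0 then 0 else if e = 1 then 1 else if e = 2 then 2
                 else if e = 3 then 2 else 1)"

definition edge_tgt :: "nat \<Rightarrow> nat" where
  "edge_tgt e = (if e = 0 then 1 else if e = 1 then 2 else if e = 2 then 2
                 else if e = 3 then 1 else 1)"

definition G_path :: "nat list \<Rightarrow> bool" where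
  "G_path p \<longleftrightarrow> p \<noteq> [] \<and> hd p = 0 \<and> set p \<subseteq> {0..4} \<and>
     (\<forall>j. Suc j < length p \<longrightarrow> edge_tgt (p ! j) = edge_src (p ! Suc j))"

definition label_a :: "nat \<Rightarrow> nat list \<Rightarrow> nat \<Rightarrow> nat list" where
  "label_a M a e = (if e = 0 \<or> e = 3 then word_plus a
                    else if e = 1 then word_bar M (word_plus a)
                    else if e = 2 then a
                    else word_bar M a)"

definition label_star :: "nat \<Rightarrow> nat" where
  "label_star e = (if e = 0 \<or> e = 3 \<or> e = 4 then 1 else 0)"

definition compose :: "nat \<Rightarrow> nat list \<Rightarrow> nat list \<Rightarrow> nat list" where
  "compose M a c = concat (map (label_a M a)
                     (THE p. G_path p \<and> map label_star p = c))"

end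

theory Submission
  imports Defs
begin

text \<open>
  Parry's criterion identifies the quasi-greedy expansions \<open>\<alpha>(q)\<close> with the admissible sequences
  (all shifts lexicographically below the sequence itself), and \<open>\<alpha>\<close> is increasing; so
  \<open>J\<^sub>b \<subseteq> J\<^sub>a\<close> becomes \<open>a\<^sup>\<infinity> \<preceq> b\<^sup>\<infinity>\<close> and \<open>\<alpha>(q\<^sub>R(b)) \<preceq> \<alpha>(q\<^sub>R(a))\<close>. Then every shift of \<open>b\<^sup>\<infinity>\<close> lies between
  \<open>\<alpha>(q\<^sub>R(a))\<close> and its reflection, and such a sequence can be cut into blocks of length \<open>|a|\<close> along
  a path of \<open>G\<close>: at each vertex only the labels of the two outgoing edges fit. Since \<open>a \<noteq> b\<close>, the
  first block is \<open>a\<^sup>+\<close>; since \<open>b\<^sup>\<infinity>\<close> is periodic, \<open>|a|\<close> divides \<open>|b|\<close> and the path returns to \<open>B\<close>, so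
  \<open>b = a \<circ> c\<close>. Finally the block substitution is monotone, so \<open>c\<close> inherits from \<open>b\<close> the
  inequalities of a fundamental word at every position following a \<open>0\<close> (the upper ones) or a \<open>1\<close>
  (the lower ones), and the remaining cases reduce to these at the start of the run of equal
  letters.
\<close>

section \<open>Sequences and words\<close>

definition shift :: "(nat \<Rightarrow> nat) \<Rightarrow> nat \<Rightarrow> nat \<Rightarrow> nat" where
  "shift s k = (\<lambda>i. s (i + k))"

definition prepend :: "nat list \<Rightarrow> (nat \<Rightarrow> nat) \<Rightarrow> nat \<Rightarrow> nat" where
  "prepend u s = (\<lambda>i. if i < length u then u ! i else s (i - length u))"

definition seq_bar :: "nat \<Rightarrow> (nat \<Rightarrow> nat) \<Rightarrow> nat \<Rightarrow> nat" where
  "seq_bar M s = (\<lambda>i. M - s i)"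

definition lex_less :: "nat list \<Rightarrow> nat list \<Rightarrow> bool" where
  "lex_less u v \<longleftrightarrow> length u = length v \<and> (\<exists>j<length u. (\<forall>i<j. u ! i = v ! i) \<and> u ! j < v ! j)"

definition lex_le :: "nat list \<Rightarrow> nat list \<Rightarrow> bool" where
  "lex_le u v \<longleftrightarrow> u = v \<or> lex_less u v"

lemma shift_apply: "shift s k i = s (i + k)"
  by (simp add: shift_def)

lemma shift_shift [simp]: "shift (shift s k) l = shift s (k + l)"
  by (simp add: shift_def ac_simps)

lemma shift_0 [simp]: "shift s 0 = s"
  by (simp add: shift_def)

lemma prepend_append: "prepend (u @ v) s = prepend u (prepend v s)"
  by (auto simp: prepend_def fun_eq_iff nth_append)

lemma shift_prepend: "shift (prepend u s) (length u) = s"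
  by (simp add: prepend_def fun_eq_iff shift_apply)

lemma shift_prepend_le: "k \<le> length u \<Longrightarrow> shift (prepend u s) k = prepend (drop k u) s"
  by (auto simp: prepend_def fun_eq_iff shift_apply add.commute)

lemma shift_prepend_ge: "length u \<le> k \<Longrightarrow> shift (prepend u s) k = shift s (k - length u)"
  by (auto simp: prepend_def fun_eq_iff shift_apply)

lemma prepend_prefix_shift: "prepend (map s [0..<r]) (shift s r) = s"
  by (auto simp: prepend_def fun_eq_iff shift_apply)

lemma map_prepend_upt: "k \<le> length u \<Longrightarrow> map (prepend u s) [0..<k] = take k u"
  by (rule nth_equalityI) (simp_all add: prepend_def)

lemma prepend_eq_prepend_iff:
  assumes "length u = length v"
  shows "prepend u s = prepend v t \<longleftrightarrow> u = v \<and> s = t"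
proof
  assume eq: "prepend u s = prepend v t"
  have "u = v"
  proof (rule nth_equalityI)
    fix i assume "i < length u"
    then show "u ! i = v ! i" using fun_cong[OF eq, of i] assms by (simp add: prepend_def)
  qed (fact assms)
  moreover have "shift (prepend u s) (length u) = shift (prepend v t) (length v)"
    using eq assms by simp
  then have "s = t" by (simp only: shift_prepend)
  ultimately show "u = v \<and> s = t" ..
qed simp

lemma seq_bar_prepend: "seq_bar M (prepend u s) = prepend (word_bar M u) (seq_bar M s)"
  by (auto simp: seq_bar_def prepend_def word_bar_def fun_eq_iff)

lemma in_Omega_shift: "in_Omega M s \<Longrightarrow> in_Omega M (shift s k)"
  by (simp add: in_Omega_def shift_apply)

lemma in_Omega_prepend: "set u \<subseteq> {0..M} \<Longrightarrow> in_Omega M s \<Longrightarrow> in_Omega M (prepend u s)"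
  unfolding in_Omega_def prepend_def using nth_mem by fastforce

lemma seq_less_irrefl: "\<not> seq_less s s"
  by (auto simp: seq_less_def)

lemma seq_less_trans:
  assumes "seq_less s t" "seq_less t u" shows "seq_less s u"
proof -
  obtain n where n: "\<forall>i<n. s i = t i" "s n < t n" using assms(1) by (auto simp: seq_less_def)
  obtain m where m: "\<forall>i<m. t i = u i" "t m < u m" using assms(2) by (auto simp: seq_less_def)
  show ?thesis
    unfolding seq_less_def using n m
    by (intro exI[of _ "min n m"]) (cases n m rule: linorder_cases; auto)
qed

lemma seq_less_asym: "seq_less s t \<Longrightarrow> \<not> seq_less t s"
  using seq_less_trans seq_less_irrefl by blast

lemma seq_less_total: "seq_less s t \<or> s = t \<or> seq_less t s"
proof (cases "s = t")
  case False
  define n where "n = (LEAST i. s i \<noteq> t i)"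
  have "\<exists>i. s i \<noteq> t i" using False by auto
  then have "s n \<noteq> t n" unfolding n_def by (rule LeastI_ex)
  moreover have "\<forall>i<n. s i = t i"
    unfolding n_def using not_less_Least by blast
  ultimately show ?thesis
    unfolding seq_less_def by (metis linorder_neqE_nat)
qed simp

lemma seq_le_refl [simp]: "seq_le s s"
  by (simp add: seq_le_def)

lemma seq_less_imp_le: "seq_less s t \<Longrightarrow> seq_le s t"
  by (simp add: seq_le_def)

lemma seq_le_trans: "seq_le s t \<Longrightarrow> seq_le t u \<Longrightarrow> seq_le s u"
  unfolding seq_le_def using seq_less_trans by blast

lemma seq_le_less_trans: "seq_le s t \<Longrightarrow> seq_less t u \<Longrightarrow> seq_less s u"
  unfolding seq_le_def using seq_less_trans by blast

lemma seq_less_le_trans: "seq_less s t \<Longrightarrow> seq_le t u \<Longrightarrow> seq_less s u"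
  unfolding seq_le_def using seq_less_trans by blast

lemma seq_le_antisym: "seq_le s t \<Longrightarrow> seq_le t s \<Longrightarrow> s = t"
  unfolding seq_le_def using seq_less_asym by blast

lemma seq_not_le: "\<not> seq_le s t \<longleftrightarrow> seq_less t s"
  unfolding seq_le_def using seq_less_total seq_less_asym by blast

lemma seq_less_not_le: "seq_less s t \<Longrightarrow> \<not> seq_le t s"
  using seq_not_le seq_le_less_trans seq_less_irrefl by blast

lemma seq_less_seq_bar:
  assumes "seq_less s t" "in_Omega M t"
  shows "seq_less (seq_bar M t) (seq_bar M s)"
proof -
  obtain n where "\<forall>i<n. s i = t i" "s n < t n" using assms(1) by (auto simp: seq_less_def)
  moreover have "t n \<le> M" using assms(2) by (simp add: in_Omega_def)
  ultimately show ?thesis unfolding seq_less_def seq_bar_def by (intro exI[of _ n]) auto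
qed

lemma seq_le_seq_bar: "seq_le s t \<Longrightarrow> in_Omega M t \<Longrightarrow> seq_le (seq_bar M t) (seq_bar M s)"
  unfolding seq_le_def using seq_less_seq_bar by blast

lemma lex_less_length: "lex_less u v \<Longrightarrow> length u = length v"
  by (simp add: lex_less_def)

lemma lex_le_length: "lex_le u v \<Longrightarrow> length u = length v"
  by (auto simp: lex_le_def lex_less_def)

lemma lex_lessI:
  "length u = length v \<Longrightarrow> j < length u \<Longrightarrow> (\<And>i. i < j \<Longrightarrow> u ! i = v ! i) \<Longrightarrow> u ! j < v ! j
   \<Longrightarrow> lex_less u v"
  unfolding lex_less_def by blast

lemma seq_less_prepend:
  assumes "length u = length v"
  shows "seq_less (prepend u s) (prepend v t) \<longleftrightarrow> lex_less u v \<or> (u = v \<and> seq_less s t)"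
proof
  assume "seq_less (prepend u s) (prepend v t)"
  then obtain n where n: "\<forall>i<n. prepend u s i = prepend v t i" "prepend u s n < prepend v t n"
    unfolding seq_less_def by blast
  show "lex_less u v \<or> (u = v \<and> seq_less s t)"
  proof (cases "n < length u")
    case True
    then have "lex_less u v"
      using n assms by (intro lex_lessI[of u v n]) (auto simp: prepend_def)
    then show ?thesis ..
  next
    case False
    have "u = v"
    proof (rule nth_equalityI)
      fix i assume "i < length u"
      then show "u ! i = v ! i" using n(1)[rule_format, of i] False assms by (simp add: prepend_def)
    qed (fact assms)
    moreover have "seq_less s t"
      unfolding seq_less_def
    proof (intro exI[of _ "n - length u"] conjI allI impI)
      fix i assume "i < n - length u"
      then show "s i = t i" using n(1)[rule_format, of "i + length u"] assms by (auto simp: prepend_def)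
    qed (use n(2) False assms in \<open>auto simp: prepend_def\<close>)
    ultimately show ?thesis by simp
  qed
next
  assume "lex_less u v \<or> (u = v \<and> seq_less s t)"
  then show "seq_less (prepend u s) (prepend v t)"
  proof
    assume "lex_less u v"
    then obtain j where "j < length u" "\<forall>i<j. u ! i = v ! i" "u ! j < v ! j"
      unfolding lex_less_def by blast
    then show ?thesis
      unfolding seq_less_def using assms by (intro exI[of _ j]) (auto simp: prepend_def)
  next
    assume "u = v \<and> seq_less s t"
    then obtain n where "u = v" "\<forall>i<n. s i = t i" "s n < t n"
      unfolding seq_less_def by blast
    then show ?thesis
      unfolding seq_less_def by (intro exI[of _ "n + length u"]) (auto simp: prepend_def)
  qed
qed

lemma seq_le_prepend:
  "length u = length v \<Longrightarrow> seq_le (prepend u s) (prepend v t) \<longleftrightarrow> lex_less u v \<or> (u = v \<and> seq_le s t)"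
  unfolding seq_le_def using seq_less_prepend prepend_eq_prepend_iff by blast

lemma seq_le_prepend_same [simp]: "seq_le (prepend u s) (prepend u t) \<longleftrightarrow> seq_le s t"
  using seq_le_prepend[of u u] by (auto simp: lex_less_def)

lemma lex_less_imp_seq_less_prepend:
  "lex_less u v \<Longrightarrow> seq_less (prepend u s) (prepend v t)"
  using seq_less_prepend lex_less_length by blast

lemma seq_le_prepend_imp_lex_le:
  "seq_le (prepend u s) (prepend v t) \<Longrightarrow> length u = length v \<Longrightarrow> lex_le u v"
  using seq_le_prepend lex_le_def by blast

lemma lex_le_imp_seq_le_prepend:
  assumes "lex_le u v" "u = v \<Longrightarrow> seq_le s t"
  shows "seq_le (prepend u s) (prepend v t)"
  using assms seq_le_prepend[OF lex_le_length[OF assms(1)]] unfolding lex_le_def by blast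

lemma lex_less_first: "length u = length v \<Longrightarrow> u \<noteq> [] \<Longrightarrow> u ! 0 < v ! 0 \<Longrightarrow> lex_less u v"
  by (rule lex_lessI[of _ _ 0]) auto

lemma lex_less_iff_seq_less:
  "lex_less u v \<longleftrightarrow> length u = length v \<and> seq_less (prepend u (\<lambda>_. 0)) (prepend v (\<lambda>_. 0))"
  using seq_less_prepend seq_less_irrefl lex_less_length by blast

lemma word_less_iff_lex_less: "length u = length v \<Longrightarrow> word_less u v \<longleftrightarrow> lex_less u v"
  unfolding word_less_def pad0_def using lex_less_iff_seq_less by (simp add: prepend_def)

lemma word_le_iff_lex_le:
  assumes "length u = length v" shows "word_le u v \<longleftrightarrow> lex_le u v"
proof -
  have "pad0 u = pad0 v \<longleftrightarrow> u = v"
    using prepend_eq_prepend_iff[OF assms, of "\<lambda>_. 0" "\<lambda>_. 0"] by (simp add: pad0_def prepend_def)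
  then show ?thesis
    unfolding word_le_def lex_le_def seq_le_def word_less_iff_lex_less[OF assms, symmetric]
    by (simp add: word_less_def)
qed

lemma lex_less_irrefl: "\<not> lex_less u u"
  by (simp add: lex_less_iff_seq_less seq_less_irrefl)

lemma lex_less_trans: "lex_less u v \<Longrightarrow> lex_less v w \<Longrightarrow> lex_less u w"
  unfolding lex_less_iff_seq_less using seq_less_trans by auto

lemma lex_less_asym: "lex_less u v \<Longrightarrow> \<not> lex_less v u"
  using lex_less_trans lex_less_irrefl by blast

lemma lex_le_less_trans: "lex_le u v \<Longrightarrow> lex_less v w \<Longrightarrow> lex_less u w"
  unfolding lex_le_def using lex_less_trans by blast

lemma lex_le_antisym: "lex_le u v \<Longrightarrow> lex_le v u \<Longrightarrow> u = v"
  unfolding lex_le_def using lex_less_asym by blast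

lemma not_lex_less:
  assumes "length u = length v" shows "\<not> lex_less u v \<longleftrightarrow> lex_le v u"
  using seq_less_total[of "prepend u (\<lambda>_. 0)" "prepend v (\<lambda>_. 0)"] seq_less_asym
    prepend_eq_prepend_iff[OF assms]
  unfolding lex_le_def lex_less_iff_seq_less using assms by auto

lemma lex_less_append_left:
  assumes "lex_less u u'" "length v = length v'" shows "lex_less (u @ v) (u' @ v')"
proof -
  obtain j where "length u = length u'" "j < length u" "\<forall>i<j. u ! i = u' ! i" "u ! j < u' ! j"
    using assms(1) unfolding lex_less_def by blast
  then show ?thesis using assms(2) by (intro lex_lessI[of _ _ j]) (auto simp: nth_append)
qed

lemma lex_less_append_right:
  assumes "lex_le u u'" "lex_less v v'" shows "lex_less (u @ v) (u' @ v')"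
proof (cases "u = u'")
  case True
  obtain j where "length v = length v'" "j < length v" "\<forall>i<j. v ! i = v' ! i" "v ! j < v' ! j"
    using assms(2) unfolding lex_less_def by blast
  then show ?thesis using True by (intro lex_lessI[of _ _ "length u + j"]) (auto simp: nth_append)
next
  case False
  then show ?thesis
    using assms lex_less_append_left lex_less_length unfolding lex_le_def by blast
qed

lemma lex_less_Cons:
  "lex_less (x # xs) (y # ys) \<longleftrightarrow> (x < y \<and> length xs = length ys) \<or> (x = y \<and> lex_less xs ys)"
proof
  assume "lex_less (x # xs) (y # ys)"
  then obtain j where j: "length xs = length ys" "j < Suc (length xs)"
      "\<forall>i<j. (x # xs) ! i = (y # ys) ! i" "(x # xs) ! j < (y # ys) ! j"
    unfolding lex_less_def by auto
  show "(x < y \<and> length xs = length ys) \<or> (x = y \<and> lex_less xs ys)"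
  proof (cases j)
    case (Suc j')
    then have "lex_less xs ys" using j by (intro lex_lessI[of _ _ j']) auto
    then show ?thesis using j(3) Suc by auto
  qed (use j in simp)
next
  assume "(x < y \<and> length xs = length ys) \<or> (x = y \<and> lex_less xs ys)"
  then show "lex_less (x # xs) (y # ys)"
  proof
    assume "x = y \<and> lex_less xs ys"
    then obtain j where "x = y" "length xs = length ys" "j < length xs"
        "\<forall>i<j. xs ! i = ys ! i" "xs ! j < ys ! j"
      unfolding lex_less_def by blast
    then show ?thesis by (intro lex_lessI[of _ _ "Suc j"]) (auto simp: less_Suc_eq_0_disj)
  qed (auto intro: lex_lessI[of _ _ 0])
qed

lemma length_word_bar [simp]: "length (word_bar M u) = length u"
  by (simp add: word_bar_def)

lemma nth_word_bar [simp]: "i < length u \<Longrightarrow> word_bar M u ! i = M - u ! i"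
  by (simp add: word_bar_def)

lemma word_bar_Nil [simp]: "word_bar M [] = []"
  by (simp add: word_bar_def)

lemma word_bar_Cons [simp]: "word_bar M (x # u) = (M - x) # word_bar M u"
  by (simp add: word_bar_def)

lemma word_bar_append [simp]: "word_bar M (u @ v) = word_bar M u @ word_bar M v"
  by (simp add: word_bar_def)

lemma word_bar_eq_Nil_iff [simp]: "word_bar M u = [] \<longleftrightarrow> u = []"
  by (simp add: word_bar_def)

lemma take_word_bar: "take k (word_bar M u) = word_bar M (take k u)"
  by (simp add: word_bar_def take_map)

lemma drop_word_bar: "drop k (word_bar M u) = word_bar M (drop k u)"
  by (simp add: word_bar_def drop_map)

lemma set_word_bar: "set (word_bar M u) \<subseteq> {0..M}"
  by (auto simp: word_bar_def)

lemma word_bar_word_bar: "set u \<subseteq> {0..M} \<Longrightarrow> word_bar M (word_bar M u) = u"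
  by (induct u) auto

lemma lex_less_word_bar:
  assumes "lex_less u v" "set v \<subseteq> {0..M}"
  shows "lex_less (word_bar M v) (word_bar M u)"
proof -
  obtain j where j: "length u = length v" "j < length u" "\<forall>i<j. u ! i = v ! i" "u ! j < v ! j"
    using assms(1) unfolding lex_less_def by blast
  have "v ! j \<le> M" using assms(2) j nth_mem by fastforce
  then show ?thesis using j by (intro lex_lessI[of _ _ j]) auto
qed

lemma lex_le_word_bar: "lex_le u v \<Longrightarrow> set v \<subseteq> {0..M} \<Longrightarrow> lex_le (word_bar M v) (word_bar M u)"
  unfolding lex_le_def using lex_less_word_bar by blast

lemma length_word_plus [simp]: "u \<noteq> [] \<Longrightarrow> length (word_plus u) = length u"
  by (simp add: word_plus_def)

lemma word_plus_not_Nil [simp]: "word_plus u \<noteq> []"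
  by (simp add: word_plus_def)

lemma word_plus_append: "v \<noteq> [] \<Longrightarrow> word_plus (u @ v) = u @ word_plus v"
  by (simp add: word_plus_def butlast_append)

lemma word_plus_take_drop: "k < length u \<Longrightarrow> word_plus u = take k u @ word_plus (drop k u)"
  using word_plus_append[of "drop k u" "take k u"] by simp

lemma take_word_plus: "k < length u \<Longrightarrow> take k (word_plus u) = take k u"
  by (simp add: word_plus_take_drop[of k u])

lemma drop_word_plus: "k < length u \<Longrightarrow> drop k (word_plus u) = word_plus (drop k u)"
  by (simp add: word_plus_take_drop[of k u])

lemma nth_word_plus_last: "u \<noteq> [] \<Longrightarrow> word_plus u ! (length u - 1) = u ! (length u - 1) + 1"
  by (simp add: word_plus_def nth_append last_conv_nth)

lemma nth_word_plus_butlast: "i < length u - 1 \<Longrightarrow> word_plus u ! i = u ! i"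
  by (simp add: word_plus_def nth_append nth_butlast)

lemma lex_less_word_plus:
  assumes "u \<noteq> []" shows "lex_less u (word_plus u)"
proof (rule lex_lessI[of _ _ "length u - 1"])
  show "u ! (length u - 1) < word_plus u ! (length u - 1)"
    using nth_word_plus_last[OF assms] by simp
qed (use assms nth_word_plus_butlast in auto)

lemma lex_less_imp_word_plus_le:
  assumes "lex_less u v" shows "lex_le (word_plus u) v"
proof -
  obtain j where j: "length u = length v" "j < length u" "\<forall>i<j. u ! i = v ! i" "u ! j < v ! j"
    using assms unfolding lex_less_def by blast
  let ?l = "length u - 1"
  have ne: "u \<noteq> []" using j by auto
  have last: "word_plus u ! ?l = u ! ?l + 1" by (rule nth_word_plus_last[OF ne])
  have other: "word_plus u ! i = u ! i" if "i < j" for i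
    using nth_word_plus_butlast[of i u] that j(2) by simp
  show ?thesis
  proof (cases "j = ?l \<and> u ! j + 1 = v ! j")
    case True
    have "word_plus u = v"
    proof (rule nth_equalityI)
      fix i assume "i < length (word_plus u)"
      then have "i < j \<or> i = j" using True ne by auto
      then show "word_plus u ! i = v ! i" using True last other j(3) by auto
    qed (use ne j in simp)
    then show ?thesis by (simp add: lex_le_def)
  next
    case False
    have "word_plus u ! j < v ! j"
    proof (cases "j = ?l")
      case True
      then show ?thesis using False last j(4) by simp
    next
      case False
      then show ?thesis using nth_word_plus_butlast[of j u] j(2,4) by simp
    qed
    then have "lex_less (word_plus u) v"
      using j ne other by (intro lex_lessI[of _ _ j]) auto
    then show ?thesis by (simp add: lex_le_def)
  qed
qed

lemma lex_le_word_plus_cases: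
  assumes "u \<noteq> []" "lex_le u w" "lex_le w (word_plus u)"
  shows "w = u \<or> w = word_plus u"
  using assms lex_le_antisym lex_less_imp_word_plus_le unfolding lex_le_def by blast

lemma per_nth: "i < length a \<Longrightarrow> per a i = a ! i"
  by (simp add: per_def)

lemma prepend_per: "a \<noteq> [] \<Longrightarrow> prepend a (per a) = per a"
  by (auto simp: per_def prepend_def fun_eq_iff le_mod_geq)

lemma per_take_drop: "a \<noteq> [] \<Longrightarrow> per a = prepend (take k a) (prepend (drop k a) (per a))"
  by (simp add: prepend_append[symmetric] prepend_per)

lemma shift_per_mult: "shift (per a) (k * length a) = per a"
  by (auto simp: per_def fun_eq_iff shift_apply)

lemma shift_per_mod: "shift (per a) k = shift (per a) (k mod length a)"
  by (auto simp: per_def fun_eq_iff shift_apply mod_add_right_eq)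

lemma shift_per: "a \<noteq> [] \<Longrightarrow> i \<le> length a \<Longrightarrow> shift (per a) i = prepend (drop i a) (per a)"
  using shift_prepend_le[of i a "per a"] by (simp add: prepend_per)

lemma seq_bar_per: "a \<noteq> [] \<Longrightarrow> seq_bar M (per a) = per (word_bar M a)"
  by (simp add: seq_bar_def per_def fun_eq_iff)

lemma in_Omega_per:
  assumes "set a \<subseteq> {0..M}" "a \<noteq> []" shows "in_Omega M (per a)"
proof -
  have "a ! (i mod length a) \<in> set a" for i using assms(2) by simp
  then show ?thesis using assms(1) unfolding in_Omega_def per_def by fastforce
qed

lemma prefix_per_eq_prepend: "prefix_per u v = prepend u (per v)"
  by (auto simp: prefix_per_def prepend_def fun_eq_iff)

section \<open>Fundamental words\<close>

context
  fixes M :: nat and a :: "nat list"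
  assumes fund: "fundamental M a"
begin

lemma fundamental_set: "set a \<subseteq> {0..M}"
  using fund by (simp add: fundamental_def)

lemma fundamental_nonempty: "a \<noteq> []"
  using fund by (auto simp: fundamental_def)

lemma fundamental_single: "length a = 1 \<Longrightarrow> 2 \<le> M \<and> M - a ! 0 \<le> a ! 0 \<and> a ! 0 < M"
  using fund by (auto simp: fundamental_def)

context
  fixes i :: nat
  assumes i: "1 \<le> i" "i < length a"
begin

lemma fundamental_conditions:
  "lex_le (word_bar M (take (length a - i) a)) (drop i a) \<and> lex_less (drop i a) (take (length a - i) a)"
proof -
  have "word_le (word_bar M (take (length a - i) a)) (drop i a) \<and> word_less (drop i a) (take (length a - i) a)"
    using fund i unfolding fundamental_def by auto
  moreover have "length (word_bar M (take (length a - i) a)) = length (drop i a)"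
    "length (drop i a) = length (take (length a - i) a)" using i by auto
  ultimately show ?thesis using word_le_iff_lex_le word_less_iff_lex_less by blast
qed

lemma fundamental_drop_less: "lex_less (drop i a) (take (length a - i) a)"
  using fundamental_conditions ..

lemma fundamental_bar_take_le: "lex_le (word_bar M (take (length a - i) a)) (drop i a)"
  using fundamental_conditions ..

lemma fundamental_bar_drop_le: "lex_le (word_bar M (drop i a)) (take (length a - i) a)"
proof -
  have "set (take (length a - i) a) \<subseteq> {0..M}"
    using fundamental_set set_take_subset by fast
  moreover have "set (drop i a) \<subseteq> {0..M}"
    using fundamental_set set_drop_subset by fast
  then have "lex_le (word_bar M (drop i a)) (word_bar M (word_bar M (take (length a - i) a)))"
    by (rule lex_le_word_bar[OF fundamental_bar_take_le])
  with \<open>set (take (length a - i) a) \<subseteq> {0..M}\<close> show ?thesis by (simp add: word_bar_word_bar)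
qed

lemma fundamental_plus_drop_le: "lex_le (word_plus (drop i a)) (take (length a - i) a)"
  by (rule lex_less_imp_word_plus_le[OF fundamental_drop_less])

end

lemma fundamental_bar_take_less:
  assumes "1 \<le> i" "i < length a"
  shows "lex_less (word_bar M (take i a)) (word_plus (drop (length a - i) a))"
proof -
  have "lex_le (word_bar M (take i a)) (drop (length a - i) a)"
    using fundamental_bar_take_le[of "length a - i"] assms by simp
  moreover have "lex_less (drop (length a - i) a) (word_plus (drop (length a - i) a))"
    by (rule lex_less_word_plus) (use assms in auto)
  ultimately show ?thesis by (rule lex_le_less_trans)
qed

lemma fundamental_first_last:
  "a ! (length a - 1) < M" "M - a ! 0 \<le> a ! (length a - 1)"
  "2 \<le> length a \<Longrightarrow> a ! (length a - 1) < a ! 0" "1 \<le> a ! 0"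
proof -
  have "a ! 0 \<le> M" using fundamental_set fundamental_nonempty nth_mem by fastforce
  moreover have "(2 \<le> length a \<and> a ! (length a - 1) < a ! 0 \<and> M - a ! 0 \<le> a ! (length a - 1))
      \<or> (length a = 1 \<and> 2 \<le> M \<and> M - a ! 0 \<le> a ! 0 \<and> a ! 0 < M)"
  proof (cases "2 \<le> length a")
    case True
    let ?l = "length a - 1"
    have l: "1 \<le> ?l" "?l < length a" using True by auto
    have "drop ?l a = [a ! ?l]" using l Cons_nth_drop_Suc[of ?l a] by simp
    moreover have "take (length a - ?l) a = [a ! 0]"
      using l by (cases a) simp_all
    ultimately show ?thesis
      using True fundamental_drop_less[OF l] fundamental_bar_take_le[OF l]
      by (auto simp: lex_le_def lex_less_def)
  next
    case False
    then have "length a = 1" using fundamental_nonempty by (cases a) (auto simp: Suc_le_eq)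
    then show ?thesis using fundamental_single by simp
  qed
  ultimately show "a ! (length a - 1) < M" "M - a ! 0 \<le> a ! (length a - 1)"
    "2 \<le> length a \<Longrightarrow> a ! (length a - 1) < a ! 0" "1 \<le> a ! 0"
    by auto
qed

lemma fundamental_plus_first:
  "M - a ! 0 < word_plus a ! 0" "M - word_plus a ! 0 < a ! 0" "1 \<le> word_plus a ! 0"
proof -
  have "word_plus a ! 0 = (if 2 \<le> length a then a ! 0 else a ! 0 + 1)"
    using fundamental_nonempty nth_word_plus_butlast[of 0 a] nth_word_plus_last[of a]
    by (auto simp: Suc_le_eq)
  then show "M - a ! 0 < word_plus a ! 0" "M - word_plus a ! 0 < a ! 0" "1 \<le> word_plus a ! 0"
    using fundamental_first_last by (auto split: if_splits)
qed

lemma fundamental_plus_set: "set (word_plus a) \<subseteq> {0..M}"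
proof -
  have "set (butlast a) \<subseteq> {0..M}" using fundamental_set by (meson in_set_butlastD subset_iff)
  moreover have "last a + 1 \<le> M"
    using fundamental_first_last(1) fundamental_nonempty by (simp add: last_conv_nth)
  ultimately show ?thesis by (simp add: word_plus_def)
qed

lemma word_plus_bar_plus: "word_plus (word_bar M (word_plus a)) = word_bar M a"
proof -
  have "last a < M"
    using fundamental_first_last(1) fundamental_nonempty by (simp add: last_conv_nth)
  then have "word_plus (word_bar M (word_plus a)) = word_bar M (butlast a @ [last a])"
    by (simp add: word_plus_def)
  then show ?thesis using fundamental_nonempty by simp
qed

lemma shift_per_less:
  assumes "1 \<le> i" "i < length a"
  shows "seq_less (shift (per a) i) (per a)"
proof -
  have "shift (per a) i = prepend (drop i a) (per a)"
    using shift_per fundamental_nonempty assms by simp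
  moreover have "per a = prepend (take (length a - i) a) (prepend (drop (length a - i) a) (per a))"
    by (rule per_take_drop[OF fundamental_nonempty])
  ultimately show ?thesis
    using lex_less_imp_seq_less_prepend[OF fundamental_drop_less[OF assms]] by metis
qed

lemma shift_per_le: "seq_le (shift (per a) k) (per a)"
proof -
  have "k mod length a < length a" using fundamental_nonempty by simp
  then show ?thesis
    using shift_per_mod[of a k] shift_per_less[of "k mod length a"] seq_less_imp_le
    by (cases "k mod length a = 0") auto
qed

end

lemma fundamental_per_inj:
  assumes fa: "fundamental M a" and fb: "fundamental M b" and eq: "per a = per b"
  shows "a = b"
proof -
  have "\<not> length a < length b" if "fundamental M a" "fundamental M b" "per a = per b" for a b
  proof
    assume lt: "length a < length b"
    have "shift (per b) (length a) = per b" using shift_per_mult[of a 1] that(3) by simp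
    moreover have "seq_less (shift (per b) (length a)) (per b)"
      using shift_per_less[OF that(2), of "length a"] fundamental_nonempty[OF that(1)] lt
      by (simp add: Suc_le_eq)
    ultimately show False using seq_less_irrefl by simp
  qed
  then have "length a = length b" using fa fb eq by (metis linorder_neqE_nat)
  then show ?thesis using eq by (intro nth_equalityI) (simp_all add: per_nth[symmetric])
qed

definition qR_seq :: "nat \<Rightarrow> nat list \<Rightarrow> nat \<Rightarrow> nat" where
  "qR_seq M a = prepend (word_plus a) (per (word_bar M a))"

lemma prefix_per_eq_qR_seq: "prefix_per (word_plus a) (word_bar M a) = qR_seq M a"
  by (simp add: qR_seq_def prefix_per_eq_prepend)

text \<open>By Parry's criterion, these are exactly the quasi-greedy expansions \<open>\<alpha>(q)\<close>, \<open>1 < q \<le> M + 1\<close>.\<close>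

definition admissible :: "nat \<Rightarrow> (nat \<Rightarrow> nat) \<Rightarrow> bool" where
  "admissible M s \<longleftrightarrow> in_Omega M s \<and> 1 \<le> s 0 \<and> not_ending_0 s \<and> (\<forall>k. seq_le (shift s k) s)"

lemma not_ending_0_periodic:
  assumes "0 < p" "\<And>n. s (n * p + r) \<noteq> 0"
  shows "not_ending_0 s"
  unfolding not_ending_0_def
proof
  fix n
  have "n \<le> n * p + r" using assms(1) by (simp add: trans_le_add1)
  then show "\<exists>i\<ge>n. s i \<noteq> 0" using assms(2) by blast
qed

context
  fixes M :: nat and a :: "nat list"
  assumes fund: "fundamental M a"
begin

lemma admissible_per: "admissible M (per a)"
proof -
  have "per a (n * length a + 0) \<noteq> 0" for n
    using fundamental_first_last(4)[OF fund] by (simp add: per_def)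
  then have "not_ending_0 (per a)"
    using fundamental_nonempty[OF fund] by (intro not_ending_0_periodic[of "length a" _ 0]) auto
  then show ?thesis
    unfolding admissible_def
    using in_Omega_per fundamental_set[OF fund] fundamental_nonempty[OF fund]
      fundamental_first_last(4)[OF fund] shift_per_le[OF fund]
    by (simp add: per_def)
qed

lemma per_bar_less_prepend_plus:
  assumes "1 \<le> k" "k < length a"
  shows "seq_less (per (word_bar M a)) (prepend (word_plus (drop (length a - k) a)) (per (word_bar M a)))"
proof -
  have "per (word_bar M a) =
      prepend (word_bar M (take k a)) (prepend (drop k (word_bar M a)) (per (word_bar M a)))"
    using per_take_drop[of "word_bar M a" k] fundamental_nonempty[OF fund] by (simp add: take_word_bar)
  then show ?thesis
    using lex_less_imp_seq_less_prepend[OF fundamental_bar_take_less[OF fund assms]] by metis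
qed

lemma qR_seq_take_drop:
  "k < length a \<Longrightarrow>
   qR_seq M a = prepend (take k a) (prepend (word_plus (drop k a)) (per (word_bar M a)))"
  by (simp add: qR_seq_def prepend_append[symmetric] word_plus_take_drop[symmetric])

lemma shift_qR_seq_le_below_period:
  assumes "k < length a"
  shows "seq_le (shift (qR_seq M a) k) (qR_seq M a)"
proof (cases "k = 0")
  case False
  then have k: "1 \<le> k" "k < length a" "length a - k < length a" using assms by auto
  have "shift (qR_seq M a) k = prepend (word_plus (drop k a)) (per (word_bar M a))"
    using shift_prepend_le[of k "word_plus a"] fundamental_nonempty[OF fund] k
    by (simp add: qR_seq_def drop_word_plus)
  moreover have "seq_le \<dots> (prepend (take (length a - k) a)
      (prepend (word_plus (drop (length a - k) a)) (per (word_bar M a))))"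
    using fundamental_plus_drop_le[OF fund k(1,2)] per_bar_less_prepend_plus[OF k(1,2)]
    by (intro lex_le_imp_seq_le_prepend) (auto intro: seq_less_imp_le)
  ultimately show ?thesis using qR_seq_take_drop[OF k(3)] by simp
qed simp

lemma shift_per_bar_le_qR_seq: "seq_le (shift (per (word_bar M a)) j) (qR_seq M a)"
proof -
  let ?m = "length a" and ?b = "word_bar M a"
  define i where "i = j mod ?m"
  have ne: "a \<noteq> []" using fundamental_nonempty[OF fund] .
  have i: "i < ?m" "shift (per ?b) j = shift (per ?b) i"
    using ne shift_per_mod[of ?b j] by (simp_all add: i_def)
  show ?thesis
  proof (cases "i = 0")
    case True
    have "lex_less ?b (word_plus a)"
      using ne fundamental_plus_first(1)[OF fund] by (intro lex_less_first) auto
    then have "seq_less (prepend ?b (per ?b)) (qR_seq M a)"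
      unfolding qR_seq_def by (rule lex_less_imp_seq_less_prepend)
    then show ?thesis using i True prepend_per[of ?b] ne by (simp add: seq_less_imp_le)
  next
    case False
    then have i': "1 \<le> i" "?m - i < ?m" using i by auto
    have "shift (per ?b) i = prepend (word_bar M (drop i a)) (per ?b)"
      using shift_per[of ?b i] i ne by (simp add: drop_word_bar)
    moreover have "seq_le \<dots> (prepend (take (?m - i) a)
        (prepend (word_plus (drop (?m - i) a)) (per ?b)))"
      using fundamental_bar_drop_le[OF fund i'(1) i(1)] per_bar_less_prepend_plus[OF i'(1) i(1)]
      by (intro lex_le_imp_seq_le_prepend) (auto intro: seq_less_imp_le)
    ultimately show ?thesis using i qR_seq_take_drop[OF i'(2)] by simp
  qed
qed

lemma admissible_qR_seq: "admissible M (qR_seq M a)"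
proof -
  let ?m = "length a" and ?b = "word_bar M a"
  have ne: "a \<noteq> []" using fundamental_nonempty[OF fund] .
  have "qR_seq M a (n * ?m + (?m + (?m - 1))) = ?b ! (?m - 1)" for n
    using ne by (simp add: qR_seq_def prepend_def per_def)
  moreover have "?b ! (?m - 1) \<noteq> 0" using fundamental_first_last(1)[OF fund] ne by simp
  ultimately have "not_ending_0 (qR_seq M a)"
    using ne by (intro not_ending_0_periodic[of ?m _ "?m + (?m - 1)"]) auto
  moreover have "seq_le (shift (qR_seq M a) k) (qR_seq M a)" for k
  proof (cases "k < ?m")
    case False
    then have "shift (qR_seq M a) k = shift (per ?b) (k - ?m)"
      using shift_prepend_ge[of "word_plus a" k] ne by (simp add: qR_seq_def)
    then show ?thesis using shift_per_bar_le_qR_seq by simp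
  qed (rule shift_qR_seq_le_below_period)
  moreover have "in_Omega M (qR_seq M a)"
    unfolding qR_seq_def
    using in_Omega_prepend[OF fundamental_plus_set[OF fund] in_Omega_per[OF set_word_bar]] ne
    by simp
  moreover have "qR_seq M a 0 = word_plus a ! 0" using ne by (simp add: qR_seq_def prepend_def)
  ultimately show ?thesis
    using fundamental_plus_first(3)[OF fund] by (simp add: admissible_def)
qed

lemma seq_bar_qR_seq: "seq_bar M (qR_seq M a) = prepend (word_bar M (word_plus a)) (per a)"
  using seq_bar_per[of "word_bar M a" M] word_bar_word_bar[OF fundamental_set[OF fund]]
    fundamental_nonempty[OF fund]
  by (simp add: qR_seq_def seq_bar_prepend)

lemma per_less_qR_seq: "seq_less (per a) (qR_seq M a)"
  using lex_less_imp_seq_less_prepend[OF lex_less_word_plus[OF fundamental_nonempty[OF fund]]]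
    prepend_per[OF fundamental_nonempty[OF fund]]
  by (metis qR_seq_def)

lemma seq_bar_qR_seq_le_shift_per: "seq_le (seq_bar M (qR_seq M a)) (shift (per a) k)"
proof -
  let ?m = "length a" and ?c = "word_bar M (word_plus a)"
  define i where "i = k mod ?m"
  have ne: "a \<noteq> []" using fundamental_nonempty[OF fund] .
  have i: "i < ?m" "shift (per a) k = shift (per a) i"
    using ne shift_per_mod[of a k] by (simp_all add: i_def)
  show ?thesis
  proof (cases "i = 0")
    case True
    have "?c ! 0 = M - word_plus a ! 0" "length ?c = length a" using ne by simp_all
    then have "lex_less ?c a"
      using ne fundamental_plus_first(2)[OF fund] by (intro lex_less_first) auto
    then have "seq_less (prepend ?c (per a)) (prepend a (per a))"
      by (rule lex_less_imp_seq_less_prepend)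
    then show ?thesis
      using i True prepend_per[OF ne] seq_bar_qR_seq by (simp add: seq_less_imp_le)
  next
    case False
    then have i': "1 \<le> i" "?m - i < ?m" using i by auto
    have "seq_bar M (qR_seq M a) = prepend (word_bar M (take (?m - i) a))
        (prepend (word_bar M (word_plus (drop (?m - i) a))) (per a))"
      using seq_bar_qR_seq word_plus_take_drop[OF i'(2)] by (simp add: prepend_append)
    moreover have "seq_le \<dots> (prepend (drop i a) (per a))"
    proof (rule lex_le_imp_seq_le_prepend[OF fundamental_bar_take_le[OF fund i'(1) i(1)]])
      have "set (word_plus (drop (?m - i) a)) \<subseteq> {0..M}"
        using fundamental_plus_set[OF fund] set_drop_subset[of "?m - i" "word_plus a"]
          drop_word_plus[OF i'(2)] by simp
      then have "lex_less (word_bar M (word_plus (drop (?m - i) a))) (take i a)"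
        using lex_less_word_bar[OF fundamental_bar_take_less[OF fund i'(1) i(1)]]
          word_bar_word_bar[of "take i a" M] fundamental_set[OF fund] set_take_subset
        by (metis subset_trans)
      then have "seq_less (prepend (word_bar M (word_plus (drop (?m - i) a))) (per a)) (per a)"
        using per_take_drop[OF ne, of i] lex_less_imp_seq_less_prepend by metis
      then show "seq_le (prepend (word_bar M (word_plus (drop (?m - i) a))) (per a)) (per a)"
        by (rule seq_less_imp_le)
    qed
    ultimately show ?thesis using i shift_per[OF ne] by simp
  qed
qed

end

section \<open>Quasi-greedy expansions\<close>

definition base_value :: "real \<Rightarrow> (nat \<Rightarrow> nat) \<Rightarrow> real" where
  "base_value q s = (\<Sum>i. real (s i) / q ^ Suc i)"

lemma geometric_digit_sums:
  fixes q c :: real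
  assumes "1 < q" shows "(\<lambda>i. c / q ^ Suc i) sums (c / (q - 1))"
proof -
  have "norm (1 / q) < 1" using assms by simp
  then have "(\<lambda>i. c / q * (1 / q) ^ i) sums (c / q * (1 / (1 - 1 / q)))"
    by (intro sums_mult geometric_sums)
  moreover have "c / q * (1 / (1 - 1 / q)) = c / (q - 1)"
    using assms by (simp add: field_simps)
  moreover have "(\<lambda>i. c / q * (1 / q) ^ i) = (\<lambda>i. c / q ^ Suc i)"
    by (simp add: power_one_over)
  ultimately show ?thesis by (simp only:)
qed

context
  fixes M :: nat and q :: real and s :: "nat \<Rightarrow> nat"
  assumes q: "1 < q" and s: "in_Omega M s"
begin

lemma summable_base_value: "summable (\<lambda>i. real (s i) / q ^ Suc i)"
proof (rule summable_comparison_test'[OF sums_summable[OF geometric_digit_sums[OF q, of M]]])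
  fix n
  show "norm (real (s n) / q ^ Suc n) \<le> real M / q ^ Suc n"
    using s q by (simp add: in_Omega_def divide_right_mono)
qed

lemma expands_one_iff: "expands_one q s \<longleftrightarrow> base_value q s = 1"
  unfolding expands_one_def base_value_def using summable_base_value by (simp add: sums_iff)

lemma base_value_nonneg: "0 \<le> base_value q s"
  unfolding base_value_def using q by (intro suminf_nonneg[OF summable_base_value]) simp

lemma base_value_pos: "s i \<noteq> 0 \<Longrightarrow> 0 < base_value q s"
  unfolding base_value_def using q by (intro suminf_pos2[OF summable_base_value, of i]) auto

lemma base_value_le: "base_value q s \<le> real M / (q - 1)"
  unfolding base_value_def
  using s q by (intro sums_le[OF _ summable_sums[OF summable_base_value] geometric_digit_sums[OF q]])
    (simp add: in_Omega_def divide_right_mono)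

end

lemma base_value_split:
  assumes q: "1 < q" and s: "in_Omega M s"
  shows "base_value q s = (\<Sum>i<n. real (s i) / q ^ Suc i) + base_value q (shift s n) / q ^ n"
proof -
  have "base_value q s = (\<Sum>i. real (s (i + n)) / q ^ Suc (i + n)) + (\<Sum>i<n. real (s i) / q ^ Suc i)"
    unfolding base_value_def by (rule suminf_split_initial_segment[OF summable_base_value[OF q s]])
  moreover have "(\<lambda>i. real (s (i + n)) / q ^ Suc (i + n)) = (\<lambda>i. real (shift s n i) / q ^ Suc i / q ^ n)"
    by (simp add: power_add field_simps shift_apply)
  moreover have "(\<Sum>i. real (shift s n i) / q ^ Suc i / q ^ n) = base_value q (shift s n) / q ^ n"
    unfolding base_value_def
    by (rule suminf_divide[OF summable_base_value[OF q in_Omega_shift[OF s]]])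
  ultimately show ?thesis by simp
qed

lemma base_value_first_difference:
  assumes q: "1 < q" and s: "in_Omega M s" and t: "in_Omega M t" and eq: "\<forall>i<j. s i = t i"
  shows "base_value q t - base_value q s =
    (real (t j) - real (s j) + base_value q (shift t (Suc j)) - base_value q (shift s (Suc j))) / q ^ Suc j"
proof -
  have "(\<Sum>i<Suc j. real (t i) / q ^ Suc i) - (\<Sum>i<Suc j. real (s i) / q ^ Suc i)
      = (real (t j) - real (s j)) / q ^ Suc j"
    using eq by (simp add: diff_divide_distrib)
  then show ?thesis
    using base_value_split[OF q s, of "Suc j"] base_value_split[OF q t, of "Suc j"]
    by (simp add: diff_divide_distrib add_divide_distrib)
qed

lemma base_value_gt_1:
  assumes q: "1 < q" and s: "in_Omega M s" and t: "in_Omega M t" and "base_value q s = 1"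
    and tails: "\<And>k. base_value q (shift s k) \<le> 1" and "not_ending_0 t" and "seq_less s t"
  shows "1 < base_value q t"
proof -
  obtain j where j: "\<forall>i<j. s i = t i" "s j < t j" using \<open>seq_less s t\<close> unfolding seq_less_def by blast
  obtain i where "Suc j \<le> i" "t i \<noteq> 0" using \<open>not_ending_0 t\<close> unfolding not_ending_0_def by blast
  then have "shift t (Suc j) (i - Suc j) \<noteq> 0" by (simp add: shift_apply)
  then have "0 < base_value q (shift t (Suc j))" by (rule base_value_pos[OF q in_Omega_shift[OF t]])
  then have "0 < real (t j) - real (s j) + base_value q (shift t (Suc j)) - base_value q (shift s (Suc j))"
    using j(2) tails[of "Suc j"] by linarith
  then have "0 < base_value q t - base_value q s"
    unfolding base_value_first_difference[OF q s t j(1)] using q by simp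
  then show ?thesis using \<open>base_value q s = 1\<close> by simp
qed

text \<open>For the supremum \<open>V\<close> of the values of all shifts, comparing a shift with \<open>s\<close> at their first
  difference gives \<open>V \<le> 1 + (V - 1) / q\<close>, which forces \<open>V \<le> 1\<close>.\<close>

lemma base_value_shift_le_1:
  assumes q: "1 < q" and s: "in_Omega M s" and one: "base_value q s = 1"
    and lex: "\<And>k. seq_le (shift s k) s"
  shows "base_value q (shift s k) \<le> 1"
proof -
  define V where "V = (SUP k. base_value q (shift s k))"
  have bdd: "bdd_above (range (\<lambda>k. base_value q (shift s k)))"
    using base_value_le[OF q in_Omega_shift[OF s]] by (intro bdd_aboveI2) blast
  have ub: "base_value q (shift s k) \<le> V" for k
    unfolding V_def by (rule cSup_upper[OF _ bdd]) simp
  have key: "base_value q (shift s k) \<le> 1 + (V - 1) / q" if V: "1 < V" for k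
  proof (cases "shift s k = s")
    case True
    then show ?thesis using one V q by simp
  next
    case False
    then obtain j where j: "\<forall>i<j. shift s k i = s i" "s (j + k) < s j"
      using lex[of k] by (auto simp: seq_le_def seq_less_def shift_apply)
    have "base_value q s - base_value q (shift s k) =
        (real (s j) - real (s (j + k)) + base_value q (shift s (Suc j)) - base_value q (shift s (k + Suc j)))
        / q ^ Suc j"
      using shift_apply[of s k j] base_value_first_difference[OF q in_Omega_shift[OF s] s j(1)] by simp
    moreover have "1 - V \<le> real (s j) - real (s (j + k)) + base_value q (shift s (Suc j))
        - base_value q (shift s (k + Suc j))"
      using j(2) ub[of "k + Suc j"] base_value_nonneg[OF q in_Omega_shift[OF s], of "Suc j"] by simp
    then have "(1 - V) / q ^ Suc j \<le> (real (s j) - real (s (j + k)) + base_value q (shift s (Suc j))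
        - base_value q (shift s (k + Suc j))) / q ^ Suc j"
      using q by (intro divide_right_mono) simp_all
    moreover have "(1 - V) / q \<le> (1 - V) / q ^ Suc j"
      using V q by (intro divide_left_mono_neg) (simp_all add: power_increasing[of 1 "Suc j" q, simplified])
    ultimately have "(1 - V) / q \<le> base_value q s - base_value q (shift s k)" by linarith
    then show ?thesis using one by (simp add: diff_divide_distrib)
  qed
  have "V \<le> 1"
  proof (rule ccontr)
    assume "\<not> V \<le> 1"
    then have "V \<le> 1 + (V - 1) / q"
      using key unfolding V_def by (intro cSUP_least) auto
    moreover have "(V - 1) / q < V - 1" using \<open>\<not> V \<le> 1\<close> q by (simp add: divide_less_eq)
    ultimately show False by simp
  qed
  then show ?thesis using ub[of k] by simp
qed

lemma base_value_antimono:
  assumes "1 < q1" "q1 \<le> q2" "in_Omega M s"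
  shows "base_value q2 s \<le> base_value q1 s"
  unfolding base_value_def
proof (rule suminf_le)
  show "summable (\<lambda>i. real (s i) / q2 ^ Suc i)" "summable (\<lambda>i. real (s i) / q1 ^ Suc i)"
    using assms summable_base_value by auto
  show "real (s n) / q2 ^ Suc n \<le> real (s n) / q1 ^ Suc n" for n
    using assms by (intro divide_left_mono power_mono) auto
qed

lemma base_value_strict_antimono:
  assumes q1: "1 < q1" and q12: "q1 < q2" and s: "in_Omega M s" and s0: "1 \<le> s 0"
  shows "base_value q2 s < base_value q1 s"
proof -
  have q2: "1 < q2" using q1 q12 by simp
  have "real (s 0) / q2 < real (s 0) / q1" using s0 q1 q12 by (simp add: divide_strict_left_mono)
  moreover have "base_value q2 (shift s 1) / q2 \<le> base_value q1 (shift s 1) / q2"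
    using q2 base_value_antimono[OF q1 less_imp_le[OF q12] in_Omega_shift[OF s]]
    by (simp add: divide_right_mono)
  moreover have "base_value q1 (shift s 1) / q2 \<le> base_value q1 (shift s 1) / q1"
    using base_value_nonneg[OF q1 in_Omega_shift[OF s]] q1 q12 by (simp add: divide_left_mono)
  ultimately show ?thesis
    using base_value_split[OF q1 s, of 1] base_value_split[OF q2 s, of 1] by simp
qed

definition greedy_digit :: "nat \<Rightarrow> real \<Rightarrow> real \<Rightarrow> nat" where
  "greedy_digit M q r = min M (nat (\<lceil>q * r\<rceil> - 1))"

text \<open>The remainders of the quasi-greedy algorithm for the expansion of \<open>1\<close>: the digit is the
  largest one that keeps the remainder strictly positive.\<close>

primrec greedy_rem :: "nat \<Rightarrow> real \<Rightarrow> nat \<Rightarrow> real" where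
  "greedy_rem M q 0 = 1"
| "greedy_rem M q (Suc n) = q * greedy_rem M q n - real (greedy_digit M q (greedy_rem M q n))"

lemma greedy_digit:
  assumes "0 < q * r"
  shows "greedy_digit M q r \<le> M" "real (greedy_digit M q r) < q * r"
    and "greedy_digit M q r < M \<Longrightarrow> q * r \<le> real (greedy_digit M q r) + 1"
proof -
  have c: "of_int \<lceil>q * r\<rceil> - 1 < q * r" "q * r \<le> of_int \<lceil>q * r\<rceil>" "1 \<le> \<lceil>q * r\<rceil>"
    using assms by linarith+
  then show "greedy_digit M q r \<le> M" "real (greedy_digit M q r) < q * r"
    and "greedy_digit M q r < M \<Longrightarrow> q * r \<le> real (greedy_digit M q r) + 1"
    by (auto simp: greedy_digit_def min_def)
qed

context
  fixes M :: nat and q :: real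
  assumes q: "1 < q" "q \<le> real M + 1"
begin

abbreviation greedy_seq :: "nat \<Rightarrow> nat" where
  "greedy_seq n \<equiv> greedy_digit M q (greedy_rem M q n)"

lemma greedy_rem_bounds: "0 < greedy_rem M q n \<and> greedy_rem M q n \<le> real M / (q - 1)"
proof (induct n)
  case 0
  then show ?case using q by (simp add: le_divide_eq)
next
  case (Suc n)
  let ?r = "greedy_rem M q n"
  have qr: "0 < q * ?r" using Suc q by simp
  have "q * ?r - real (greedy_digit M q ?r) \<le> real M / (q - 1)"
  proof (cases "greedy_digit M q ?r < M")
    case True
    moreover have "1 \<le> real M / (q - 1)" using q by (simp add: le_divide_eq)
    ultimately show ?thesis using greedy_digit(3)[OF qr, of M] by linarith
  next
    case False
    then have "greedy_digit M q ?r = M" using greedy_digit(1)[OF qr, of M] by simp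
    moreover have "q * ?r \<le> q * (real M / (q - 1))" using Suc q by (intro mult_left_mono) auto
    moreover have "q * (real M / (q - 1)) - real M = real M / (q - 1)"
      using q by (simp add: field_simps)
    ultimately show ?thesis by simp
  qed
  then show ?case using greedy_digit(2)[OF qr] by simp
qed

lemma greedy_partial_sums:
  "(\<Sum>i<n. real (greedy_seq i) / q ^ Suc i) = 1 - greedy_rem M q n / q ^ n"
proof (induct n)
  case (Suc n)
  have "(\<Sum>i<Suc n. real (greedy_seq i) / q ^ Suc i)
      = 1 - greedy_rem M q n / q ^ n + real (greedy_seq n) / q ^ Suc n"
    using Suc by simp
  also have "\<dots> = 1 - (q * greedy_rem M q n - real (greedy_seq n)) / q ^ Suc n"
    using q by (simp add: field_simps)
  finally show ?case by simp
qed simp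

lemma greedy_in_Omega: "in_Omega M greedy_seq"
  using greedy_digit(1) greedy_rem_bounds q by (simp add: in_Omega_def)

lemma greedy_sums: "(\<lambda>i. real (greedy_seq i) / q ^ Suc i) sums 1"
proof -
  define R where "R = real M / (q - 1)"
  have "(\<lambda>n. greedy_rem M q n / q ^ n) \<longlonglongrightarrow> 0"
  proof (rule real_tendsto_sandwich[where f = "\<lambda>n. 0" and h = "\<lambda>n. R * (1 / q) ^ n"])
    show "\<forall>\<^sub>F n in sequentially. 0 \<le> greedy_rem M q n / q ^ n"
      using greedy_rem_bounds q by (intro always_eventually allI) (simp add: less_imp_le)
    have "greedy_rem M q n * (1 / q) ^ n \<le> R * (1 / q) ^ n" for n
      using greedy_rem_bounds q unfolding R_def by (intro mult_right_mono) auto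
    then show "\<forall>\<^sub>F n in sequentially. greedy_rem M q n / q ^ n \<le> R * (1 / q) ^ n"
      by (simp add: power_one_over)
    have "(\<lambda>n. (1 / q) ^ n) \<longlonglongrightarrow> 0" using q by (intro LIMSEQ_realpow_zero) auto
    then show "(\<lambda>n. R * (1 / q) ^ n) \<longlonglongrightarrow> 0" by (rule tendsto_mult_right_zero)
  qed simp
  then have "(\<lambda>n. 1 - greedy_rem M q n / q ^ n) \<longlonglongrightarrow> 1 - 0" by (intro tendsto_intros)
  then show ?thesis unfolding sums_def greedy_partial_sums by simp
qed

lemma greedy_not_ending_0: "not_ending_0 greedy_seq"
  unfolding not_ending_0_def
proof (rule ccontr)
  assume "\<not> (\<forall>n. \<exists>i\<ge>n. greedy_seq i \<noteq> 0)"
  then obtain N where N: "\<And>i. N \<le> i \<Longrightarrow> greedy_seq i = 0" by auto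
  have grow: "greedy_rem M q (N + j) = q ^ j * greedy_rem M q N" for j
  proof (induct j)
    case (Suc j)
    have "greedy_seq (N + j) = 0" using N by simp
    with Suc show ?case by simp
  qed simp
  obtain j where "real M / (q - 1) / greedy_rem M q N < q ^ j" using real_arch_pow[OF q(1)] by blast
  moreover have "0 < greedy_rem M q N" using greedy_rem_bounds by simp
  ultimately have "real M / (q - 1) < q ^ j * greedy_rem M q N"
    using pos_divide_less_eq by blast
  then show False using grow[of j] greedy_rem_bounds[of "N + j"] by simp
qed

text \<open>If \<open>t\<close> exceeds the greedy sequence first at \<open>j\<close>, then the greedy remainder at \<open>j\<close> is too
  small to accommodate the tail of \<open>t\<close>, which is positive.\<close>

lemma greedy_maximal:
  assumes t: "in_Omega M t" "not_ending_0 t" "expands_one q t"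
  shows "seq_le t greedy_seq"
proof (rule ccontr)
  assume "\<not> seq_le t greedy_seq"
  then obtain j where j: "\<forall>i<j. greedy_seq i = t i" "greedy_seq j < t j"
    unfolding seq_not_le seq_less_def by blast
  let ?r = "greedy_rem M q j"
  obtain i where "Suc j \<le> i" "t i \<noteq> 0" using t(2) unfolding not_ending_0_def by blast
  then have "shift t (Suc j) (i - Suc j) \<noteq> 0" by (simp add: shift_apply)
  then have tail: "0 < base_value q (shift t (Suc j))" by (rule base_value_pos[OF q(1) in_Omega_shift[OF t(1)]])
  have "greedy_seq j < M" using j(2) t(1) by (simp add: in_Omega_def less_le_trans)
  then have "q * ?r \<le> real (t j)"
    using greedy_digit(3)[of q ?r M] greedy_rem_bounds q j(2) by simp
  then have "q * ?r / q ^ Suc j < (real (t j) + base_value q (shift t (Suc j))) / q ^ Suc j"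
    using tail q by (intro divide_strict_right_mono) auto
  moreover have "q * ?r / q ^ Suc j = ?r / q ^ j" using q by simp
  moreover have "(\<Sum>i<j. real (t i) / q ^ Suc i) = 1 - ?r / q ^ j"
    using j(1) greedy_partial_sums[of j] by simp
  ultimately have "1 < base_value q t"
    using base_value_split[OF q(1) t(1), of "Suc j"] by (simp add: add_divide_distrib)
  then show False using t(1,3) expands_one_iff[OF q(1)] by simp
qed

lemma quasi_greedy_exists: "\<exists>s. is_quasi_greedy M q s"
  using greedy_in_Omega greedy_not_ending_0 greedy_sums greedy_maximal
  unfolding is_quasi_greedy_def expands_one_def by blast

end

lemma admissible_quasi_greedy:
  assumes adm: "admissible M s" and q: "1 < q" and one: "base_value q s = 1"
  shows "is_quasi_greedy M q s"
proof -
  have s: "in_Omega M s" "not_ending_0 s" using adm by (simp_all add: admissible_def)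
  have tails: "base_value q (shift s k) \<le> 1" for k
    using base_value_shift_le_1[OF q s(1) one] adm by (simp add: admissible_def)
  have "seq_le t s" if "in_Omega M t" "not_ending_0 t" "expands_one q t" for t
    using base_value_gt_1[OF q s(1) that(1) one tails that(2)] that(1,3) expands_one_iff[OF q]
    by (metis less_irrefl seq_not_le)
  then show ?thesis
    unfolding is_quasi_greedy_def using s one expands_one_iff[OF q s(1)] by blast
qed

lemma summable_digit_powser:
  fixes x :: real
  assumes "in_Omega M s" "0 \<le> x" "x < 1"
  shows "summable (\<lambda>n. real (s n) * x ^ n)"
proof (rule summable_comparison_test'[where g = "\<lambda>n. real M * x ^ n" and N = 0])
  show "summable (\<lambda>n. real M * x ^ n)" using assms by (intro summable_mult summable_geometric) simp
  show "norm (real (s n) * x ^ n) \<le> real M * x ^ n" for n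
    using assms by (simp add: in_Omega_def mult_right_mono)
qed

lemma base_value_inverse_eq_powser:
  fixes x :: real
  assumes "in_Omega M s" "0 < x" "x < 1"
  shows "base_value (1 / x) s = x * (\<Sum>n. real (s n) * x ^ n)"
proof -
  have "base_value (1 / x) s = (\<Sum>n. x * (real (s n) * x ^ n))"
    unfolding base_value_def by (simp add: power_one_over field_simps)
  also have "\<dots> = x * (\<Sum>n. real (s n) * x ^ n)"
    using summable_digit_powser[OF assms(1) less_imp_le[OF assms(2)] assms(3)] by (rule suminf_mult)
  finally show ?thesis .
qed

lemma isCont_digit_powser:
  fixes x :: real
  assumes "in_Omega M s" "\<bar>x\<bar> < 1"
  shows "isCont (\<lambda>x. \<Sum>n. real (s n) * x ^ n) x"
proof (rule isCont_powser)
  show "summable (\<lambda>n. real (s n) * ((1 + \<bar>x\<bar>) / 2) ^ n)"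
    using assms by (intro summable_digit_powser) auto
  show "norm x < norm ((1 + \<bar>x\<bar>) / 2)" using assms by auto
qed

text \<open>With \<open>b\<close> the \<open>(j + 1)\<close>-th root of \<open>1/2\<close>, the two nonzero digits \<open>s\<^sub>0\<close> and \<open>s\<^sub>j\<close> alone give
  value at least \<open>b + 1/2 \<ge> 1\<close> in base \<open>1 / b\<close>.\<close>

lemma base_value_ge_1_exists:
  assumes adm: "admissible M s"
  obtains b :: real where "1 / 2 \<le> b" "b < 1" "1 \<le> base_value (1 / b) s"
proof -
  have s: "in_Omega M s" and s0: "1 \<le> s 0" using adm by (simp_all add: admissible_def)
  obtain j where j: "1 \<le> j" "s j \<noteq> 0" using adm unfolding admissible_def not_ending_0_def by blast
  define b where "b = root (Suc j) (1 / 2)"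
  have b: "0 < b" "b < 1" "b ^ Suc j = 1 / 2"
    unfolding b_def using real_root_pow_pos2[of "Suc j" "1 / 2"] by simp_all
  have "b ^ Suc j \<le> b ^ 1" using b by (intro power_decreasing) auto
  then have "1 / 2 \<le> b" using b(3) by simp
  define q where "q = 1 / b"
  have q: "1 < q" using b by (simp add: q_def)
  have "(\<Sum>i\<in>{0, j}. real (s i) / q ^ Suc i) \<le> base_value q s"
    unfolding base_value_def using q by (intro sum_le_suminf[OF summable_base_value[OF q s]]) auto
  moreover have "b + b ^ Suc j \<le> (\<Sum>i\<in>{0, j}. real (s i) / q ^ Suc i)"
    using j s0 q b by (simp add: q_def power_one_over add_mono mult_left_mono)
  ultimately show ?thesis using that \<open>1 / 2 \<le> b\<close> b unfolding q_def by simp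
qed

lemma base_value_eq_1_exists:
  assumes M: "1 \<le> M" and adm: "admissible M s"
  shows "\<exists>q. 1 < q \<and> q \<le> real M + 1 \<and> base_value q s = 1"
proof -
  have s: "in_Omega M s" using adm by (simp add: admissible_def)
  define F where "F x = x * (\<Sum>n. real (s n) * x ^ n)" for x :: real
  have F: "F x = base_value (1 / x) s" if "0 < x" "x < 1" for x
    using base_value_inverse_eq_powser[OF s that] by (simp add: F_def)
  define a where "a = 1 / (real M + 1)"
  have a: "0 < a" "a \<le> 1 / 2" using M by (simp_all add: a_def field_simps)
  obtain b where b: "1 / 2 \<le> b" "b < 1" "1 \<le> base_value (1 / b) s"
    by (rule base_value_ge_1_exists[OF adm])
  then have "1 \<le> F b" using F[of b] by simp
  have "F a \<le> 1"
    using F[of a] a base_value_le[of "real M + 1" M s] M s by (simp add: a_def)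
  moreover have "continuous_on {a..b} F"
    using a b(1,2) isCont_digit_powser[OF s] unfolding F_def
    by (intro continuous_at_imp_continuous_on ballI isCont_mult continuous_ident) auto
  ultimately obtain x where x: "a \<le> x" "x \<le> b" "F x = 1"
    using IVT'[of F a 1 b] a b(1) \<open>1 \<le> F b\<close> by fastforce
  then have "0 < x" "x < 1" using a b by simp_all
  moreover have "1 / x \<le> real M + 1"
    using x(1) a \<open>0 < x\<close> by (simp add: a_def field_simps)
  ultimately show ?thesis using F x(3) by (intro exI[of _ "1 / x"]) simp
qed

lemma alpha_eqI: "is_quasi_greedy M q s \<Longrightarrow> alpha M q = s"
  unfolding alpha_def is_quasi_greedy_def using seq_le_antisym by blast

definition alpha_inv :: "nat \<Rightarrow> (nat \<Rightarrow> nat) \<Rightarrow> real" where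
  "alpha_inv M s = (THE q. 1 < q \<and> q \<le> real M + 1 \<and> alpha M q = s)"

lemma alpha_inv:
  assumes M: "1 \<le> M" and adm: "admissible M s"
  shows "1 < alpha_inv M s" "alpha_inv M s \<le> real M + 1" "base_value (alpha_inv M s) s = 1"
proof -
  obtain q0 where q0: "1 < q0" "q0 \<le> real M + 1" "base_value q0 s = 1"
    using base_value_eq_1_exists[OF M adm] by blast
  have s: "in_Omega M s" "1 \<le> s 0" using adm by (simp_all add: admissible_def)
  have "alpha_inv M s = q0"
    unfolding alpha_inv_def
  proof (rule the_equality)
    show "1 < q0 \<and> q0 \<le> real M + 1 \<and> alpha M q0 = s"
      using q0 alpha_eqI[OF admissible_quasi_greedy[OF adm q0(1,3)]] by simp
  next
    fix q assume q: "1 < q \<and> q \<le> real M + 1 \<and> alpha M q = s"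
    \<comment> \<open>\<open>alpha M q\<close> is a definite description; it is quasi-greedy only because one exists.\<close>
    then obtain t where "is_quasi_greedy M q t" using quasi_greedy_exists by blast
    then have "is_quasi_greedy M q s" using q alpha_eqI by metis
    then have "base_value q s = 1"
      using q expands_one_iff[OF _ s(1)] by (simp add: is_quasi_greedy_def)
    then show "q = q0"
      using q q0 base_value_strict_antimono[OF _ _ s] by (metis less_irrefl linorder_neqE)
  qed
  then show "1 < alpha_inv M s" "alpha_inv M s \<le> real M + 1" "base_value (alpha_inv M s) s = 1"
    using q0 by simp_all
qed

lemma alpha_inv_le_imp_seq_le:
  assumes M: "1 \<le> M" and adm1: "admissible M s1" and adm2: "admissible M s2"
    and le: "alpha_inv M s1 \<le> alpha_inv M s2"
  shows "seq_le s1 s2"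
proof (rule ccontr)
  assume "\<not> seq_le s1 s2"
  then have lt: "seq_less s2 s1" by (simp add: seq_not_le)
  let ?q = "alpha_inv M s2"
  have s1: "in_Omega M s1" "not_ending_0 s1" and s2: "in_Omega M s2"
    using adm1 adm2 by (simp_all add: admissible_def)
  have tails: "base_value ?q (shift s2 k) \<le> 1" for k
    using base_value_shift_le_1[OF alpha_inv(1)[OF M adm2] s2 alpha_inv(3)[OF M adm2]] adm2
    by (simp add: admissible_def)
  have "1 < base_value ?q s1"
    using base_value_gt_1[OF alpha_inv(1)[OF M adm2] s2 s1(1) alpha_inv(3)[OF M adm2] tails s1(2) lt] .
  moreover have "base_value ?q s1 \<le> base_value (alpha_inv M s1) s1"
    using base_value_antimono[OF alpha_inv(1)[OF M adm1] le s1(1)] .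
  ultimately show False using alpha_inv(3)[OF M adm1] by simp
qed

section \<open>Block substitution\<close>

text \<open>The labels \<open>\<L>\<^sub>a\<close> of the edges of \<open>G\<close>, indexed by the \<open>\<L>\<^sup>*\<close>-label \<open>p\<close> of the previous edge
  (\<open>p = 1\<close>: current vertex \<open>A\<close>; \<open>p = 0\<close>: current vertex \<open>B\<close>, or Start, whose only edge \<open>e\<^sub>0\<close>
  carries the same labels as \<open>e\<^sub>3\<close>) and the \<open>\<L>\<^sup>*\<close>-label \<open>x\<close> of the edge.\<close>

definition block :: "nat \<Rightarrow> nat list \<Rightarrow> nat \<Rightarrow> nat \<Rightarrow> nat list" where
  "block M a p x = (if p = 0 then (if x = 0 then a else word_plus a)
                    else (if x = 0 then word_bar M (word_plus a) else word_bar M a))"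

primrec blocks :: "nat \<Rightarrow> nat list \<Rightarrow> nat \<Rightarrow> nat list \<Rightarrow> nat list" where
  "blocks M a p [] = []"
| "blocks M a p (x # xs) = block M a p x @ blocks M a x xs"

lemma length_block: "a \<noteq> [] \<Longrightarrow> length (block M a p x) = length a"
  by (simp add: block_def)

lemma length_blocks: "a \<noteq> [] \<Longrightarrow> length (blocks M a p xs) = length xs * length a"
  by (induct xs arbitrary: p) (simp_all add: length_block)

lemma blocks_append: "blocks M a p (xs @ ys) = blocks M a p xs @ blocks M a (last (p # xs)) ys"
  by (induct xs arbitrary: p) simp_all

context
  fixes M :: nat and a :: "nat list"
  assumes fund: "fundamental M a"
begin

lemma lex_less_block: "lex_less (block M a p 0) (block M a p 1)"
  using lex_less_word_plus[OF fundamental_nonempty[OF fund]]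
    lex_less_word_bar[OF lex_less_word_plus[OF fundamental_nonempty[OF fund]] fundamental_plus_set[OF fund]]
  by (simp add: block_def)

lemma lex_less_blocks:
  "lex_less xs ys \<Longrightarrow> set xs \<subseteq> {0, 1} \<Longrightarrow> set ys \<subseteq> {0, 1} \<Longrightarrow>
   lex_less (blocks M a p xs) (blocks M a p ys)"
proof (induct xs arbitrary: ys p)
  case Nil
  then show ?case by (simp add: lex_less_def)
next
  case (Cons x xs)
  obtain y ys' where ys: "ys = y # ys'"
    using lex_less_length[OF Cons.prems(1)] by (cases ys) auto
  have "(x < y \<and> length xs = length ys') \<or> (x = y \<and> lex_less xs ys')"
    using Cons.prems(1) ys lex_less_Cons by simp
  then show ?case
  proof
    assume "x < y \<and> length xs = length ys'"
    then have "x = 0" "y = 1" "length (blocks M a x xs) = length (blocks M a y ys')"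
      using Cons.prems(2,3) ys length_blocks[OF fundamental_nonempty[OF fund]] by auto
    then show ?thesis using ys lex_less_append_left[OF lex_less_block] by simp
  next
    assume "x = y \<and> lex_less xs ys'"
    then show ?thesis
      using Cons ys lex_less_append_right[of "block M a p x" "block M a p x"] by (simp add: lex_le_def)
  qed
qed

context
  fixes xs ys :: "nat list"
  assumes xs: "set xs \<subseteq> {0, 1}" and ys: "set ys \<subseteq> {0, 1}" and len: "length xs = length ys"
begin

lemma lex_less_blocks_iff: "lex_less (blocks M a p xs) (blocks M a p ys) \<longleftrightarrow> lex_less xs ys"
  using lex_less_blocks[OF _ xs ys] lex_less_blocks[OF _ ys xs] not_lex_less[OF len]
    lex_less_asym lex_le_def
  by metis

lemma lex_le_blocks_iff: "lex_le (blocks M a p xs) (blocks M a p ys) \<longleftrightarrow> lex_le xs ys"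
  using lex_less_blocks_iff[of p] lex_less_blocks[OF _ ys xs, of p] not_lex_less[OF len]
    not_lex_less[of "blocks M a p xs" "blocks M a p ys"] length_blocks[OF fundamental_nonempty[OF fund]] len
  by (metis (no_types) lex_le_def lex_less_irrefl)

end

lemma word_bar_block:
  assumes "p \<le> 1" "x \<le> 1"
  shows "word_bar M (block M a p x) = block M a (1 - p) (1 - x)"
  using assms word_bar_word_bar[OF fundamental_set[OF fund]]
    word_bar_word_bar[OF fundamental_plus_set[OF fund]]
  by (cases "p = 0"; cases "x = 0") (auto simp: block_def)

lemma word_bar_blocks:
  "p \<le> 1 \<Longrightarrow> set xs \<subseteq> {0, 1} \<Longrightarrow> word_bar M (blocks M a p xs) = blocks M a (1 - p) (word_bar 1 xs)"
proof (induct xs arbitrary: p)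
  case (Cons x xs)
  then have "x \<le> 1" by auto
  with Cons show ?case by (simp add: word_bar_block)
qed simp

end

section \<open>Parsing a sequence into blocks\<close>

text \<open>A sequence \<open>Y\<close> between the reflection of \<open>\<alpha>(q\<^sub>R(a))\<close> and \<open>\<alpha>(q\<^sub>R(a))\<close>, which at vertex \<open>B\<close> also
  satisfies \<open>a\<^sup>\<infinity> \<preceq> Y\<close> and at vertex \<open>A\<close> also \<open>Y \<preceq> per (word_bar M a)\<close> (\<open>parse_inv\<close>), begins with the
  label of one of the two edges leaving that vertex, and its tail satisfies \<open>parse_inv\<close> at the target.\<close>

definition next_letter :: "nat \<Rightarrow> nat list \<Rightarrow> nat \<Rightarrow> (nat \<Rightarrow> nat) \<Rightarrow> nat" where
  "next_letter M a p Y = (if map Y [0..<length a] = block M a p 0 then 0 else 1)"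

definition parse_inv :: "nat \<Rightarrow> nat list \<Rightarrow> nat \<Rightarrow> (nat \<Rightarrow> nat) \<Rightarrow> bool" where
  "parse_inv M a p Y \<longleftrightarrow> (if p = 0 then seq_le (per a) Y else seq_le Y (per (word_bar M a)))"

primrec parse_state :: "nat \<Rightarrow> nat list \<Rightarrow> (nat \<Rightarrow> nat) \<Rightarrow> nat \<Rightarrow> nat" where
  "parse_state M a X 0 = 0"
| "parse_state M a X (Suc j) = next_letter M a (parse_state M a X j) (shift X (j * length a))"

declare parse_state.simps(2) [simp del] \<comment> \<open>it would loop with the block decompositions of \<open>X\<close>\<close>

lemma next_letter_le_1: "next_letter M a p Y \<le> 1"
  by (simp add: next_letter_def)

lemma parse_state_le_1: "parse_state M a X j \<le> 1"
  by (cases j) (simp_all add: parse_state.simps(2) next_letter_def)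

context
  fixes M :: nat and a :: "nat list"
  assumes fund: "fundamental M a"
begin

lemma word_plus_block: "p \<le> 1 \<Longrightarrow> word_plus (block M a p 0) = block M a p 1"
  using word_plus_bar_plus[OF fund] by (auto simp: block_def)

lemma prepend_block_lower:
  "p \<le> 1 \<Longrightarrow> prepend (block M a p 0) (per a) = (if p = 0 then per a else seq_bar M (qR_seq M a))"
  using prepend_per[OF fundamental_nonempty[OF fund]] seq_bar_qR_seq[OF fund] by (auto simp: block_def)

lemma prepend_block_upper:
  "p \<le> 1 \<Longrightarrow> prepend (block M a p 1) (per (word_bar M a)) = (if p = 0 then qR_seq M a else per (word_bar M a))"
  using prepend_per[of "word_bar M a"] fundamental_nonempty[OF fund] by (auto simp: block_def qR_seq_def)

lemma parse_step:
  assumes p: "p \<le> 1"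
    and low: "seq_le (prepend (block M a p 0) (per a)) Y"
    and up: "seq_le Y (prepend (block M a p 1) (per (word_bar M a)))"
  shows "Y = prepend (block M a p (next_letter M a p Y)) (shift Y (length a))"
    and "parse_inv M a (next_letter M a p Y) (shift Y (length a))"
proof -
  let ?m = "length a" and ?w = "map Y [0..<length a]"
  have ne: "a \<noteq> []" using fundamental_nonempty[OF fund] .
  have Y: "Y = prepend ?w (shift Y ?m)" by (simp add: prepend_prefix_shift)
  have len: "length (block M a p x) = ?m" for x using length_block[OF ne] .
  have "length ?w = ?m" by simp
  then have "lex_le (block M a p 0) ?w" "lex_le ?w (block M a p 1)"
    using low up Y len seq_le_prepend_imp_lex_le by metis+
  moreover have "block M a p 0 \<noteq> []" using len ne by (metis length_0_conv)
  ultimately have "?w = block M a p 0 \<or> ?w = block M a p 1"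
    using lex_le_word_plus_cases word_plus_block[OF p] by metis
  moreover have "block M a p 1 \<noteq> block M a p 0"
    using lex_less_block[OF fund, of p] lex_less_irrefl by metis
  ultimately have w: "?w = block M a p (next_letter M a p Y)"
    by (auto simp: next_letter_def)
  then show "Y = prepend (block M a p (next_letter M a p Y)) (shift Y ?m)" using Y by simp
  show "parse_inv M a (next_letter M a p Y) (shift Y ?m)"
  proof (cases "next_letter M a p Y = 0")
    case True
    then show ?thesis using low w Y by (metis parse_inv_def seq_le_prepend_same)
  next
    case False
    then show ?thesis using up w Y next_letter_le_1[of M a p Y]
      by (metis le_eq_less_or_eq less_one parse_inv_def seq_le_prepend_same)
  qed
qed

context
  fixes X :: "nat \<Rightarrow> nat"
  assumes window: "\<And>k. seq_le (seq_bar M (qR_seq M a)) (shift X k)" "\<And>k. seq_le (shift X k) (qR_seq M a)"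
    and start: "seq_le (per a) X"
begin

lemma parse_step_at:
  assumes inv: "parse_inv M a (parse_state M a X j) (shift X (j * length a))"
  shows "shift X (j * length a) =
      prepend (block M a (parse_state M a X j) (parse_state M a X (Suc j))) (shift X (Suc j * length a))"
    and "parse_inv M a (parse_state M a X (Suc j)) (shift X (Suc j * length a))"
proof -
  let ?p = "parse_state M a X j" and ?Y = "shift X (j * length a)"
  have p: "?p \<le> 1" by (rule parse_state_le_1)
  have "seq_le (prepend (block M a ?p 0) (per a)) ?Y"
    using inv window(1)[of "j * length a"] prepend_block_lower[OF p]
    by (auto simp: parse_inv_def split: if_splits)
  moreover have "seq_le ?Y (prepend (block M a ?p 1) (per (word_bar M a)))"
    using inv window(2)[of "j * length a"] prepend_block_upper[OF p]
    by (auto simp: parse_inv_def split: if_splits)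
  ultimately have "?Y = prepend (block M a ?p (next_letter M a ?p ?Y)) (shift ?Y (length a))"
    "parse_inv M a (next_letter M a ?p ?Y) (shift ?Y (length a))"
    using parse_step[OF p] by blast+
  moreover have "shift ?Y (length a) = shift X (Suc j * length a)"
    by (simp add: shift_shift add.commute)
  ultimately show "?Y = prepend (block M a ?p (parse_state M a X (Suc j))) (shift X (Suc j * length a))"
    "parse_inv M a (parse_state M a X (Suc j)) (shift X (Suc j * length a))"
    by (simp_all add: parse_state.simps(2))
qed

lemma parse_inv_parse_state: "parse_inv M a (parse_state M a X j) (shift X (j * length a))"
  by (induct j) (use start parse_step_at(2) in \<open>simp_all add: parse_inv_def\<close>)

lemmas parse_blocks = parse_step_at(1)[OF parse_inv_parse_state]

lemma last_parse_states:
  "last (0 # map (\<lambda>i. parse_state M a X (Suc i)) [0..<j]) = parse_state M a X j"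
  by (cases j) simp_all

lemma parse_prefix:
  "map X [0..<j * length a] = blocks M a 0 (map (\<lambda>i. parse_state M a X (Suc i)) [0..<j])"
proof (induct j)
  case (Suc j)
  let ?m = "length a" and ?B = "block M a (parse_state M a X j) (parse_state M a X (Suc j))"
  have "length ?B = ?m" using length_block[OF fundamental_nonempty[OF fund]] .
  then have "map (shift X (j * ?m)) [0..<?m] = ?B"
    using map_prepend_upt[of "length ?B" ?B] by (simp only: parse_blocks[of j] take_all order.refl)
  moreover have "map X [j * ?m..<Suc j * ?m] = map (shift X (j * ?m)) [0..<?m]"
    by (rule nth_equalityI) (simp_all add: shift_apply add.commute)
  ultimately have blk: "map X [j * ?m..<Suc j * ?m] = ?B" by simp
  have "map X [0..<Suc j * ?m] = map X [0..<j * ?m] @ map X [j * ?m..<Suc j * ?m]"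
    using upt_add_eq_append[of 0 "j * ?m" ?m] by (simp add: add.commute)
  also have "\<dots> = blocks M a 0 (map (\<lambda>i. parse_state M a X (Suc i)) [0..<j]) @ ?B"
    using Suc blk by simp
  also have "\<dots> = blocks M a 0 (map (\<lambda>i. parse_state M a X (Suc i)) [0..<Suc j])"
    using blocks_append[of M a 0 _ "[parse_state M a X (Suc j)]"] last_parse_states[of j] by simp
  finally show ?case .
qed simp

end

end

context
  fixes M :: nat and a b :: "nat list"
  assumes fa: "fundamental M a" and fb: "fundamental M b" and ab: "a \<noteq> b"
    and qL_le: "seq_le (per a) (per b)" and qR_le: "seq_le (qR_seq M b) (qR_seq M a)"
begin

abbreviation state :: "nat \<Rightarrow> nat" where
  "state j \<equiv> parse_state M a (per b) j"

lemma per_b_window: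
  "seq_le (seq_bar M (qR_seq M a)) (shift (per b) k)" "seq_le (shift (per b) k) (qR_seq M a)"
proof -
  have "seq_le (seq_bar M (qR_seq M a)) (seq_bar M (qR_seq M b))"
    using seq_le_seq_bar[OF qR_le] admissible_qR_seq[OF fa] by (simp add: admissible_def)
  then show "seq_le (seq_bar M (qR_seq M a)) (shift (per b) k)"
    using seq_bar_qR_seq_le_shift_per[OF fb] seq_le_trans by blast
  show "seq_le (shift (per b) k) (qR_seq M a)"
    using shift_per_le[OF fb] per_less_qR_seq[OF fb] qR_le
    by (meson seq_le_less_trans seq_less_imp_le seq_less_le_trans)
qed

lemmas per_b_blocks = parse_blocks[OF fa per_b_window qL_le]
lemmas per_b_parse_inv = parse_inv_parse_state[OF fa per_b_window qL_le]

lemma per_b_block_0: "per b = prepend (block M a 0 (state 1)) (shift (per b) (length a))"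
  using per_b_blocks[of 0] by simp

text \<open>If the first block were \<open>a\<close>, so would be all later ones, because a block \<open>a\<^sup>+\<close> at vertex \<open>B\<close>
  would start a shift of \<open>b\<^sup>\<infinity>\<close> above \<open>b\<^sup>\<infinity>\<close>; but then \<open>b\<^sup>\<infinity> = a\<^sup>\<infinity>\<close>.\<close>

lemma state_1_eq_1: "state 1 = 1"
proof (rule ccontr)
  let ?m = "length a"
  assume "state 1 \<noteq> 1"
  then have "state 1 = 0" using parse_state_le_1[of M a "per b" 1] by simp
  then have X: "per b = prepend a (shift (per b) ?m)"
    using per_b_block_0 by (simp add: block_def)
  have all0: "state (Suc j) = 0" for j
  proof (induct j)
    case (Suc j)
    show ?case
    proof (rule ccontr)
      assume "state (Suc (Suc j)) \<noteq> 0"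
      then have "shift (per b) (Suc j * ?m) = prepend (word_plus a) (shift (per b) (Suc (Suc j) * ?m))"
        using per_b_blocks[of "Suc j"] Suc by (simp add: block_def)
      then have "seq_less (per b) (shift (per b) (Suc j * ?m))"
        using X lex_less_imp_seq_less_prepend[OF lex_less_word_plus[OF fundamental_nonempty[OF fa]]] by metis
      then show False using shift_per_le[OF fb] seq_less_not_le by blast
    qed
  qed (use \<open>state 1 = 0\<close> in simp)
  have "per b = per a"
  proof
    fix i
    have r: "i mod ?m < ?m" using fundamental_nonempty[OF fa] by simp
    have "state (i div ?m) = 0" using all0 by (cases "i div ?m") auto
    then have "shift (per b) (i div ?m * ?m) = prepend a (shift (per b) (Suc (i div ?m) * ?m))"
      using per_b_blocks[of "i div ?m"] all0[of "i div ?m"] by (simp add: block_def)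
    then have "shift (per b) (i div ?m * ?m) (i mod ?m) = a ! (i mod ?m)"
      using r by (simp add: prepend_def)
    then show "per b i = per a i" by (simp add: per_def shift_apply)
  qed
  then show False using fundamental_per_inj[OF fa fb] ab by simp
qed

lemma per_b_first_block: "per b = prepend (word_plus a) (shift (per b) (length a))"
  using per_b_block_0 state_1_eq_1 by (simp add: block_def)

lemma prepend_less_per_b:
  assumes r: "1 \<le> r" "r < length a" and u: "lex_le u (take (length a - r) a)"
  shows "seq_less (prepend (u @ word_bar M (take r a)) t) (per b)"
proof -
  have "lex_less (u @ word_bar M (take r a)) (take (length a - r) a @ word_plus (drop (length a - r) a))"
    using lex_less_append_right[OF u fundamental_bar_take_less[OF fa r]] .
  then have "seq_less (prepend (u @ word_bar M (take r a)) t) (prepend (word_plus a) (shift (per b) (length a)))"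
    using word_plus_take_drop[of "length a - r" a] r lex_less_imp_seq_less_prepend by simp
  then show ?thesis using per_b_first_block by simp
qed

lemma shift_per_b_last_blocks:
  "shift (per b) (length b div length a * length a) =
   prepend (take (length b mod length a)
     (block M a (state (length b div length a)) (state (Suc (length b div length a))))) (per b)"
proof -
  let ?m = "length a" and ?k = "length b div length a" and ?r = "length b mod length a"
  let ?Y = "shift (per b) (?k * ?m)" and ?B = "block M a (state ?k) (state (Suc ?k))"
  have "shift ?Y ?r = per b"
    using shift_per_mult[of b 1] by (simp add: add.commute)
  moreover have "map ?Y [0..<?r] = take ?r ?B"
    using map_prepend_upt[of ?r ?B] length_block[OF fundamental_nonempty[OF fa]]
      mod_less_divisor[of ?m "length b"] fundamental_nonempty[OF fa]
    by (simp only: per_b_blocks[of ?k]) simp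
  ultimately show ?thesis
    using prepend_prefix_shift[of ?Y ?r] by simp
qed

text \<open>If \<open>|b| = k|a| + r\<close> with \<open>0 < r\<close>, the shift of \<open>b\<^sup>\<infinity>\<close> by \<open>k|a|\<close> is the beginning of length \<open>r\<close> of
  an \<open>a\<close>-block followed by \<open>b\<^sup>\<infinity>\<close>; the upper bound on this shift then puts \<open>b\<^sup>\<infinity>\<close> strictly
  below itself.\<close>

lemma length_a_dvd_length_b: "length a dvd length b"
proof (rule ccontr)
  let ?m = "length a" and ?k = "length b div length a" and ?r = "length b mod length a"
  let ?B = "block M a (state ?k) (state (Suc ?k))" and ?ab = "word_bar M a"
  assume "\<not> ?m dvd length b"
  then have r: "1 \<le> ?r" "?r < ?m" using fundamental_nonempty[OF fa] mod_greater_zero_iff_not_dvd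
    by (auto simp: Suc_le_eq)
  note Y = shift_per_b_last_blocks
  have per_ab: "per ?ab = prepend (word_bar M (take ?r a)) (prepend (drop ?r ?ab) (per ?ab))"
    using per_take_drop[of ?ab ?r] fundamental_nonempty[OF fa] by (simp add: take_word_bar)
  show False
  proof (cases "state ?k = 0")
    case True
    then have "take ?r ?B = take ?r a" using take_word_plus[OF r(2)] by (simp add: block_def)
    then have "seq_le (prepend (take ?r a) (per b))
        (prepend (take ?r a) (prepend (word_plus (drop ?r a)) (per ?ab)))"
      using per_b_window(2)[of "?k * ?m"] Y qR_seq_take_drop[OF fa r(2)] by simp
    then have "seq_le (per b) (prepend (word_plus (drop ?r a) @ word_bar M (take ?r a)) (prepend (drop ?r ?ab) (per ?ab)))"
      using per_ab by (simp add: prepend_append)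
    then show False
      using prepend_less_per_b[OF r fundamental_plus_drop_le[OF fa r]] seq_less_not_le by blast
  next
    case False
    then have st: "state ?k = 1" using parse_state_le_1[of M a "per b" ?k] by simp
    then have "take ?r ?B = word_bar M (take ?r a)"
      using take_word_plus[OF r(2)] by (simp add: block_def take_word_bar)
    then have "seq_le (prepend (word_bar M (take ?r a)) (per b)) (per ?ab)"
      using per_b_parse_inv[of ?k] st Y by (simp add: parse_inv_def)
    then have "seq_le (prepend (word_bar M (take ?r a)) (per b))
        (prepend (word_bar M (take ?r a)) (prepend (drop ?r ?ab) (per ?ab)))"
      by (simp only: per_ab[symmetric])
    then have "seq_le (per b) (prepend (drop ?r ?ab) (per ?ab))" by simp
    moreover have "prepend (drop ?r ?ab) (per ?ab) =
        prepend (word_bar M (drop ?r a) @ word_bar M (take ?r a)) (prepend (drop ?r ?ab) (per ?ab))"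
      by (simp only: prepend_append drop_word_bar[symmetric] per_ab[symmetric])
    ultimately have "seq_le (per b) (prepend (word_bar M (drop ?r a) @ word_bar M (take ?r a))
        (prepend (drop ?r ?ab) (per ?ab)))"
      by simp
    then show False
      using prepend_less_per_b[OF r fundamental_bar_drop_le[OF fa r]] seq_less_not_le by blast
  qed
qed

lemma state_last_eq_0: "state (length b div length a) = 0"
proof (rule ccontr)
  let ?k = "length b div length a" and ?ab = "word_bar M a"
  assume "state ?k \<noteq> 0"
  then have "seq_le (per b) (per ?ab)"
    using per_b_parse_inv[of ?k] parse_state_le_1[of M a "per b" ?k] shift_per_mult[of b 1]
      length_a_dvd_length_b
    by (simp add: parse_inv_def)
  moreover have "lex_less ?ab (word_plus a)"
    using fundamental_nonempty[OF fa] fundamental_plus_first(1)[OF fa] by (intro lex_less_first) auto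
  then have "seq_less (per ?ab) (per b)"
    using lex_less_imp_seq_less_prepend per_b_first_block prepend_per[of ?ab] fundamental_nonempty[OF fa]
    by (metis word_bar_eq_Nil_iff)
  ultimately show False using seq_less_not_le by blast
qed

lemma nested_fundamental_eq_blocks:
  obtains c where "2 \<le> length c" "set c \<subseteq> {0, 1}" "c ! 0 = 1" "c ! (length c - 1) = 0"
    "b = blocks M a 0 c"
proof
  let ?m = "length a" and ?k = "length b div length a"
  let ?c = "map (\<lambda>i. state (Suc i)) [0..<?k]"
  have n: "length b = ?k * ?m" using length_a_dvd_length_b by simp
  then have "?k \<noteq> 0" using fundamental_nonempty[OF fb] by (metis length_0_conv mult_0)
  moreover have "?k \<noteq> 1" using state_last_eq_0 state_1_eq_1 by auto
  ultimately show "2 \<le> length ?c" by simp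
  have st01: "state j \<in> {0, 1}" for j using parse_state_le_1[of M a "per b" j] by auto
  show "set ?c \<subseteq> {0, 1}" unfolding set_map by (intro image_subsetI st01)
  show "?c ! 0 = 1" using state_1_eq_1 \<open>?k \<noteq> 0\<close> by simp
  show "?c ! (length ?c - 1) = 0" using state_last_eq_0 \<open>?k \<noteq> 0\<close> by simp
  have "b = map (per b) [0..<length b]" by (rule nth_equalityI) (simp_all add: per_nth)
  then show "b = blocks M a 0 ?c" using parse_prefix[OF fa per_b_window qL_le, of ?k] n by simp
qed

end

section \<open>The parsed word is fundamental\<close>

context
  fixes M :: nat and a b c :: "nat list"
  assumes fa: "fundamental M a" and fb: "fundamental M b"
    and c01: "set c \<subseteq> {0, 1}" and bc: "b = blocks M a 0 c"
begin

context
  fixes i :: nat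
  assumes i: "1 \<le> i" "i < length c"
begin

lemma drop_blocks: "drop (i * length a) b = blocks M a (c ! (i - 1)) (drop i c)"
proof -
  have "take i c \<noteq> []" using i by auto
  then have "last (0 # take i c) = c ! (i - 1)" using i by (simp add: last_conv_nth)
  then have "b = blocks M a 0 (take i c) @ blocks M a (c ! (i - 1)) (drop i c)"
    using bc blocks_append[of M a 0 "take i c" "drop i c"] by simp
  moreover have "length (blocks M a 0 (take i c)) = i * length a"
    using length_blocks[OF fundamental_nonempty[OF fa]] i by simp
  ultimately show ?thesis by simp
qed

lemma take_blocks: "take (length b - i * length a) b = blocks M a 0 (take (length c - i) c)"
proof -
  let ?y = "take (length c - i) c"
  have "b = blocks M a 0 ?y @ blocks M a (last (0 # ?y)) (drop (length c - i) c)"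
    using bc blocks_append[of M a 0 ?y "drop (length c - i) c"] by simp
  moreover have "length (blocks M a 0 ?y) = length b - i * length a"
    using length_blocks[OF fundamental_nonempty[OF fa]] i bc by (simp add: diff_mult_distrib)
  ultimately show ?thesis by (metis append_eq_conv_conj)
qed

lemma b_conditions_at_block_boundary:
  "lex_less (drop (i * length a) b) (take (length b - i * length a) b)"
  "lex_le (word_bar M (take (length b - i * length a) b)) (drop (i * length a) b)"
proof -
  have "1 \<le> i * length a" "i * length a < length b"
    using i fundamental_nonempty[OF fa] length_blocks[OF fundamental_nonempty[OF fa]] bc
    by (simp_all add: Suc_le_eq)
  then show "lex_less (drop (i * length a) b) (take (length b - i * length a) b)"
    "lex_le (word_bar M (take (length b - i * length a) b)) (drop (i * length a) b)"
    using fundamental_drop_less[OF fb] fundamental_bar_take_le[OF fb] by simp_all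
qed

lemma c_condition_after_0:
  assumes "c ! (i - 1) = 0" shows "lex_less (drop i c) (take (length c - i) c)"
proof -
  have "set (drop i c) \<subseteq> {0, 1}" "set (take (length c - i) c) \<subseteq> {0, 1}"
    using c01 set_drop_subset set_take_subset by (meson order_trans)+
  moreover have "lex_less (blocks M a 0 (drop i c)) (blocks M a 0 (take (length c - i) c))"
    using b_conditions_at_block_boundary(1) assms by (simp add: drop_blocks take_blocks)
  ultimately show ?thesis using lex_less_blocks_iff[OF fa] i by simp
qed

lemma c_condition_after_1:
  assumes "c ! (i - 1) = 1" shows "lex_le (word_bar 1 (take (length c - i) c)) (drop i c)"
proof -
  let ?x = "drop i c" and ?y = "take (length c - i) c"
  have x: "set ?x \<subseteq> {0, 1}" and y: "set ?y \<subseteq> {0, 1}"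
    using c01 set_drop_subset set_take_subset by (meson order_trans)+
  have y': "set (word_bar 1 ?y) \<subseteq> {0, 1}" using set_word_bar[of 1 ?y] by auto
  have "lex_le (blocks M a 1 (word_bar 1 ?y)) (blocks M a 1 ?x)"
    using b_conditions_at_block_boundary(2) word_bar_blocks[OF fa, of 0 ?y] y assms
    by (simp add: drop_blocks take_blocks)
  then show ?thesis using lex_le_blocks_iff[OF fa y' x] i by simp
qed

end

end

lemma run_start:
  "i < length c \<Longrightarrow> c ! i = v \<Longrightarrow>
   \<exists>s\<le>i. (\<forall>l. s \<le> l \<and> l \<le> i \<longrightarrow> c ! l = v) \<and> (s = 0 \<or> c ! (s - 1) \<noteq> v)"
proof (induct i)
  case (Suc i)
  show ?case
  proof (cases "c ! i = v")
    case True
    then obtain s where "s \<le> i" "\<forall>l. s \<le> l \<and> l \<le> i \<longrightarrow> c ! l = v" "s = 0 \<or> c ! (s - 1) \<noteq> v"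
      using Suc by auto
    then show ?thesis using Suc.prems by (intro exI[of _ s]) (auto simp: le_Suc_eq)
  next
    case False
    then show ?thesis using Suc.prems by (intro exI[of _ "Suc i"]) auto
  qed
qed auto

lemma run_across:
  assumes i: "1 \<le> i" "i \<le> length c" and v: "c ! (i - 1) = v" and after: "\<And>l. l < t \<Longrightarrow> c ! (i + l) = v"
  obtains s where "s < i" "\<And>l. s \<le> l \<Longrightarrow> l < i + t \<Longrightarrow> c ! l = v" "s = 0 \<or> c ! (s - 1) \<noteq> v"
proof -
  obtain s where s: "s \<le> i - 1" "\<forall>l. s \<le> l \<and> l \<le> i - 1 \<longrightarrow> c ! l = v" "s = 0 \<or> c ! (s - 1) \<noteq> v"
  proof -
    have "i - 1 < length c" using i by simp
    then show ?thesis using run_start[of "i - 1" c v] v that by blast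
  qed
  have run: "c ! l = v" if "s \<le> l" "l < i + t" for l
  proof (cases "l < i")
    case True
    then show ?thesis using s(2) that by simp
  next
    case False
    then show ?thesis using after[of "l - i"] that by simp
  qed
  have "s < i" using s(1) i(1) by simp
  then show ?thesis using run s(3) by (rule that)
qed

lemma lex_le_ones_prefix:
  assumes "lex_le u v" "set v \<subseteq> {0, 1}" "\<forall>l<t. u ! l = 1" "t \<le> length u" "l < t"
  shows "v ! l = 1"
proof (cases "u = v")
  case False
  then obtain j where j: "length u = length v" "j < length u" "\<forall>i<j. u ! i = v ! i" "u ! j < v ! j"
    using assms(1) unfolding lex_le_def lex_less_def by blast
  have "v ! j \<in> set v" using j(1,2) by simp
  then have "u ! j = 0" using j(4) assms(2) by auto
  have "t \<le> j"
  proof (rule ccontr)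
    assume "\<not> t \<le> j"
    then show False using assms(3) \<open>u ! j = 0\<close> by simp
  qed
  then show ?thesis using j(3) assms(3,5) by simp
qed (use assms in simp)

lemma lex_less_zeros_prefix:
  assumes "lex_less v u" "\<forall>l<t. u ! l = 0" "l < t"
  shows "v ! l = 0"
proof -
  obtain j where j: "\<forall>i<j. v ! i = u ! i" "v ! j < u ! j"
    using assms(1) unfolding lex_less_def by blast
  have "t \<le> j"
  proof (rule ccontr)
    assume "\<not> t \<le> j"
    then show False using assms(2) j(2) by simp
  qed
  then show ?thesis using j(1) assms(2,3) by simp
qed

context
  fixes c :: "nat list"
  assumes c01: "set c \<subseteq> {0, 1}" and c_first: "c ! 0 = 1" and c_last: "c ! (length c - 1) = 0"
    and c_len: "2 \<le> length c"
begin

lemma binary_nth: "l < length c \<Longrightarrow> c ! l = 0 \<or> c ! l = 1"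
  using c01 nth_mem by blast

lemma binary_first_zero:
  obtains t where "t < length c" "c ! t = 0" "\<forall>l<t. c ! l = 1"
proof -
  obtain t where t: "c ! t = 0" "\<forall>l<t. c ! l \<noteq> 0"
    using exists_least_iff[of "\<lambda>t. c ! t = 0"] c_last by blast
  have "t \<le> length c - 1" using t c_last by (meson not_less)
  then have "t < length c" using c_len by simp
  moreover have "\<forall>l<t. c ! l = 1"
  proof (intro allI impI)
    fix l assume "l < t"
    then show "c ! l = 1" using t(2) binary_nth[of l] \<open>t < length c\<close> by force
  qed
  ultimately show ?thesis using that t(1) by blast
qed

text \<open>Each of the two conditions in the definition of a fundamental binary word holds at every
  position once it holds after every \<open>0\<close> (respectively after every \<open>1\<close>): otherwise follow
  the run of equal letters through position \<open>i - 1\<close> back to its start \<open>s\<close> and compare at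
  position \<open>s\<close> instead.\<close>

lemma binary_drop_less_take:
  assumes U0: "\<And>i. 1 \<le> i \<Longrightarrow> i < length c \<Longrightarrow> c ! (i - 1) = 0 \<Longrightarrow>
      lex_less (drop i c) (take (length c - i) c)"
    and i: "1 \<le> i" "i < length c"
  shows "lex_less (drop i c) (take (length c - i) c)"
proof (cases "c ! (i - 1) = 0")
  case False
  let ?k = "length c"
  have ci: "c ! (i - 1) = 1" using False binary_nth[of "i - 1"] i by simp
  obtain t where t: "t < ?k" "c ! t = 0" "\<forall>l<t. c ! l = 1" by (rule binary_first_zero)
  show ?thesis
  proof (rule ccontr)
    assume "\<not> ?thesis"
    then have le: "lex_le (take (?k - i) c) (drop i c)" using not_lex_less[of "drop i c"] i by simp
    have after: "c ! (i + l) = 1" if "l < min t (?k - i)" for l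
      using lex_le_ones_prefix[OF le _ _ _ that] c01 set_drop_subset[of i c] t(3) that by fastforce
    show False
    proof (cases "?k - i \<le> t")
      case True
      then show False using after[of "?k - i - 1"] c_last i by simp
    next
      case False
      obtain s where s: "s < i" "\<And>l. s \<le> l \<Longrightarrow> l < i + t \<Longrightarrow> c ! l = 1" "s = 0 \<or> c ! (s - 1) \<noteq> 1"
        by (rule run_across[of i c 1 t]) (use i ci after False in auto)
      show False
      proof (cases "s = 0")
        case True
        then show False using s(2)[of t] t(2) i by simp
      next
        case False
        then have "lex_less (drop s c) (take (?k - s) c)"
          using U0[of s] s(1,3) binary_nth[of "s - 1"] i by simp
        moreover have "lex_less (take (?k - s) c) (drop s c)"
          using s(1) i \<open>\<not> ?k - i \<le> t\<close> t(2,3) s(2)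
          by (intro lex_lessI[of _ _ t]) auto
        ultimately show False using lex_less_asym by blast
      qed
    qed
  qed
qed (rule U0[OF i])

lemma binary_bar_take_le_drop:
  assumes L1: "\<And>i. 1 \<le> i \<Longrightarrow> i < length c \<Longrightarrow> c ! (i - 1) = 1 \<Longrightarrow>
      lex_le (word_bar 1 (take (length c - i) c)) (drop i c)"
    and i: "1 \<le> i" "i < length c"
  shows "lex_le (word_bar 1 (take (length c - i) c)) (drop i c)"
proof (cases "c ! (i - 1) = 1")
  case False
  let ?k = "length c"
  have ci: "c ! (i - 1) = 0" using False binary_nth[of "i - 1"] i by simp
  obtain t where t: "t < ?k" "c ! t = 0" "\<forall>l<t. c ! l = 1" by (rule binary_first_zero)
  show ?thesis
  proof (rule ccontr)
    assume "\<not> ?thesis"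
    then have lt: "lex_less (drop i c) (word_bar 1 (take (?k - i) c))"
      using not_lex_less[of "drop i c" "word_bar 1 (take (?k - i) c)"] i by simp
    have after: "c ! (i + l) = 0" if "l < min t (?k - i)" for l
      using lex_less_zeros_prefix[OF lt _ that] t(3) i by simp
    show False
    proof (cases "?k - i \<le> t")
      case True
      obtain j where "j < ?k - i" "drop i c ! j < word_bar 1 (take (?k - i) c) ! j"
        using lt unfolding lex_less_def by auto
      then show False using True t(3) by simp
    next
      case False
      obtain s where s: "s < i" "\<And>l. s \<le> l \<Longrightarrow> l < i + t \<Longrightarrow> c ! l = 0" "s = 0 \<or> c ! (s - 1) \<noteq> 0"
        by (rule run_across[of i c 0 t]) (use i ci after False in auto)
      have "s \<noteq> 0" using s(2)[of 0] c_first i by auto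
      then have "lex_le (word_bar 1 (take (?k - s) c)) (drop s c)"
        using L1[of s] s(1,3) binary_nth[of "s - 1"] i by simp
      moreover have "lex_less (drop s c) (word_bar 1 (take (?k - s) c))"
        using s(1) i False t(2,3) s(2)
        by (intro lex_lessI[of _ _ t]) auto
      ultimately show False using lex_le_less_trans lex_less_irrefl by blast
    qed
  qed
qed (rule L1[OF i])

lemma fundamental_binaryI:
  assumes "\<And>i. 1 \<le> i \<Longrightarrow> i < length c \<Longrightarrow> c ! (i - 1) = 0 \<Longrightarrow>
      lex_less (drop i c) (take (length c - i) c)"
    and "\<And>i. 1 \<le> i \<Longrightarrow> i < length c \<Longrightarrow> c ! (i - 1) = 1 \<Longrightarrow>
      lex_le (word_bar 1 (take (length c - i) c)) (drop i c)"
  shows "fundamental 1 c"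
  unfolding fundamental_def
proof (intro conjI disjI1 allI impI)
  show "set c \<subseteq> {0..1}" using c01 by auto
  fix i assume "1 \<le> i \<and> i < length c"
  then show "word_le (word_bar 1 (take (length c - i) c)) (drop i c)"
    "word_less (drop i c) (take (length c - i) c)"
    using binary_drop_less_take[OF assms(1)] binary_bar_take_le_drop[OF assms(2)]
      word_le_iff_lex_le word_less_iff_lex_less
    by simp_all
qed (fact c_len)

end

lemma blocks_word_fundamental:
  assumes fa: "fundamental M a" and fb: "fundamental M b"
    and c: "2 \<le> length c" "set c \<subseteq> {0, 1}" "c ! 0 = 1" "c ! (length c - 1) = 0"
    and bc: "b = blocks M a 0 c"
  shows "fundamental 1 c"
  using fundamental_binaryI[OF c(2,3,4,1)]
    c_condition_after_0[OF fa fb c(2) bc] c_condition_after_1[OF fa fb c(2) bc]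
  by blast

section \<open>Paths in the graph \<open>G\<close>\<close>

lemma G_edge_determined:
  assumes "e \<in> {0..4}" "e' \<in> {0..4}" "edge_src e = edge_src e'" "label_star e = label_star e'"
  shows "e = e'"
proof -
  have "e \<in> {0, 1, 2, 3, 4}" "e' \<in> {0, 1, 2, 3, 4}" using assms(1,2) by auto
  then show ?thesis using assms(3,4) by (auto simp: edge_src_def label_star_def)
qed

text \<open>\<open>\<L>\<^sup>*\<close> is right-resolving, so a path from Start is determined by its label.\<close>

lemma G_path_unique:
  assumes P: "G_path P" and Q: "G_path Q" and eq: "map label_star P = map label_star Q"
  shows "P = Q"
proof -
  have len: "length P = length Q" using arg_cong[OF eq, of length] by simp
  have "P ! j = Q ! j" if "j < length P" for j
    using that
  proof (induct j)
    case 0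
    have "P ! 0 = 0" "Q ! 0 = 0" using P Q by (auto simp: G_path_def hd_conv_nth)
    then show ?case by simp
  next
    case (Suc j)
    have "P ! Suc j \<in> {0..4}" "Q ! Suc j \<in> {0..4}"
      using P Q Suc.prems len nth_mem unfolding G_path_def by (metis subsetD)+
    moreover have "edge_src (P ! Suc j) = edge_src (Q ! Suc j)"
      using P Q Suc len unfolding G_path_def by (metis Suc_lessD)
    moreover have "label_star (P ! Suc j) = label_star (Q ! Suc j)"
      using arg_cong[OF eq, of "\<lambda>xs. xs ! Suc j"] Suc.prems len by simp
    ultimately show ?case by (rule G_edge_determined)
  qed
  then show ?thesis using len by (intro nth_equalityI) auto
qed

definition G_edge :: "nat \<Rightarrow> nat \<Rightarrow> nat" where
  "G_edge p x = (if p = 0 then (if x = 0 then 2 else 3) else (if x = 0 then 1 else 4))"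

primrec G_edges :: "nat \<Rightarrow> nat list \<Rightarrow> nat list" where
  "G_edges p [] = []"
| "G_edges p (x # xs) = G_edge p x # G_edges x xs"

lemma G_edges_labels:
  "set xs \<subseteq> {0, 1} \<Longrightarrow> map label_star (G_edges p xs) = xs"
  "set xs \<subseteq> {0, 1} \<Longrightarrow> concat (map (label_a M a) (G_edges p xs)) = blocks M a p xs"
  by (induct xs arbitrary: p) (auto simp: G_edge_def label_star_def label_a_def block_def)

lemma G_edges_chain:
  "Suc j < length (G_edges p xs) \<Longrightarrow>
   edge_tgt (G_edges p xs ! j) = edge_src (G_edges p xs ! Suc j)"
proof (induct xs arbitrary: p j)
  case (Cons x xs)
  then show ?case
    by (cases j; cases xs) (auto simp: G_edge_def edge_src_def edge_tgt_def)
qed simp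

lemma G_path_G_edges: "G_path (0 # G_edges 1 xs)"
proof -
  have "set (G_edges p xs) \<subseteq> {0..4}" for p
    by (induct xs arbitrary: p) (auto simp: G_edge_def)
  moreover have "edge_tgt ((0 # G_edges 1 xs) ! j) = edge_src ((0 # G_edges 1 xs) ! Suc j)"
    if "Suc j < length (0 # G_edges 1 xs)" for j
    using that G_edges_chain[of "j - 1" 1 xs]
    by (cases j; cases xs) (auto simp: G_edge_def edge_src_def edge_tgt_def)
  ultimately show ?thesis by (auto simp: G_path_def)
qed

lemma compose_eq_blocks:
  assumes c: "set c \<subseteq> {0, 1}" "c \<noteq> []" "c ! 0 = 1"
  shows "compose M a c = blocks M a 0 c"
proof -
  obtain cs where cs: "c = 1 # cs" using c(2,3) by (cases c) auto
  let ?P = "0 # G_edges 1 cs"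
  have labels: "map label_star ?P = c"
    using G_edges_labels(1)[of cs 1] c(1) cs by (simp add: label_star_def)
  have "(THE P. G_path P \<and> map label_star P = c) = ?P"
    using G_path_G_edges labels G_path_unique by (intro the_equality) auto
  then show ?thesis
    using G_edges_labels(2)[of cs M a 1] c(1) cs by (simp add: compose_def label_a_def block_def)
qed

section \<open>Nested fundamental intervals\<close>

lemma qL_eq_alpha_inv: "qL M a = alpha_inv M (per a)"
  by (simp add: qL_def alpha_inv_def)

lemma qR_eq_alpha_inv: "qR M a = alpha_inv M (qR_seq M a)"
  by (simp add: qR_def alpha_inv_def prefix_per_eq_qR_seq)

lemma seq_less_imp_alpha_inv_less:
  "1 \<le> M \<Longrightarrow> admissible M s1 \<Longrightarrow> admissible M s2 \<Longrightarrow> seq_less s1 s2 \<Longrightarrow> alpha_inv M s1 < alpha_inv M s2"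
  using alpha_inv_le_imp_seq_le seq_less_not_le by (meson not_le)

lemma J_subset_imp_seq_le:
  assumes M: "1 \<le> M" and fa: "fundamental M a" and fb: "fundamental M b" and J: "J M b \<subseteq> J M a"
  shows "seq_le (per a) (per b)" "seq_le (qR_seq M b) (qR_seq M a)"
proof -
  have "qL M b < qR M b"
    using seq_less_imp_alpha_inv_less[OF M admissible_per[OF fb] admissible_qR_seq[OF fb]
        per_less_qR_seq[OF fb]]
    by (simp add: qL_eq_alpha_inv qR_eq_alpha_inv)
  then have "qL M b \<in> J M a" "qR M b \<in> J M a" using J by (auto simp: J_def)
  then have "qL M a \<le> qL M b" "qR M b \<le> qR M a" by (simp_all add: J_def)
  then show "seq_le (per a) (per b)" "seq_le (qR_seq M b) (qR_seq M a)"
    using alpha_inv_le_imp_seq_le[OF M] admissible_per admissible_qR_seq fa fb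
    by (simp_all add: qL_eq_alpha_inv qR_eq_alpha_inv)
qed

theorem lemma2p13:
  fixes M :: nat and a b :: "nat list"
  assumes "M \<ge> 1"
    and "fundamental M a" and "fundamental M b" and "a \<noteq> b"
    and "J M b \<subset> J M a"
  shows "\<exists>c. fundamental 1 c \<and> b = compose M a c"
proof -
  obtain c where c: "2 \<le> length c" "set c \<subseteq> {0, 1}" "c ! 0 = 1" "c ! (length c - 1) = 0"
    and b: "b = blocks M a 0 c"
    using nested_fundamental_eq_blocks[OF assms(2-4) J_subset_imp_seq_le[OF assms(1-3)]] assms(5) by blast
  have "fundamental 1 c" by (rule blocks_word_fundamental[OF assms(2,3) c b])
  moreover have "c \<noteq> []" using c(1) by auto
  then have "b = compose M a c" using compose_eq_blocks[OF c(2) _ c(3)] b by simp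
  ultimately show ?thesis by blast
qed

end
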